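(* There is a universal constant $C>0$ such that for all sufficiently small $\varepsilon>0$ the following holds. Let $P$ be an irreducible, aperiodic transition matrix on a finite set $G$, reversible with respect to the probability measure $\pi$. If $A\subset S\subset G$ satisfy $\pi(A)\le\varepsilon\pi(S)$, then $$h_S(A)=\sum_{x\in A}h_S(x)\le C\,\frac{\varepsilon\log(1/\varepsilon)}{1-\lambda}.$$ In particular this applies to simple random walk on a finite regular graph whenever $|A|\le\varepsilon|S|$.
   Context: $(X_t)$ is the chain with transition matrix $P$. $\lambda=\max_{j>1}|\lambda_j|$, where $1=\lambda_1>\lambda_2\ge\dots\ge\lambda_n>-1$ are the eigenvalues of $P$. For $S\subset G$, $T_S=\inf\{t\ge0:X_t\in S\}$. The harmonic measure on $S$ from $y$ is $h_{y,S}(x)=\Pr_y[X_{T_S}=x]$ and $h_S(x)=\sum_y\pi(y)h_{y,S}(x)$ is the harmonic measure from stationarity. *)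

theory Defs
  imports Complex_Main "Jordan_Normal_Form.Char_Poly"
begin

(* State space G = {..<n}; a transition matrix is P :: nat => nat => real,
   P i j = probability of moving from i to j (only entries with i,j < n matter). *)

definition stochastic :: "nat \<Rightarrow> (nat \<Rightarrow> nat \<Rightarrow> real) \<Rightarrow> bool" where
  "stochastic n P \<longleftrightarrow> (\<forall>i<n. \<forall>j<n. 0 \<le> P i j) \<and> (\<forall>i<n. (\<Sum>j<n. P i j) = 1)"

fun nstep :: "nat \<Rightarrow> (nat \<Rightarrow> nat \<Rightarrow> real) \<Rightarrow> nat \<Rightarrow> nat \<Rightarrow> nat \<Rightarrow> real" where
  "nstep n P 0 i j = (if i = j then 1 else 0)"
| "nstep n P (Suc k) i j = (\<Sum>l<n. P i l * nstep n P k l j)"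

definition irreducible_chain :: "nat \<Rightarrow> (nat \<Rightarrow> nat \<Rightarrow> real) \<Rightarrow> bool" where
  "irreducible_chain n P \<longleftrightarrow> (\<forall>i<n. \<forall>j<n. \<exists>k. nstep n P k i j > 0)"

definition aperiodic_chain :: "nat \<Rightarrow> (nat \<Rightarrow> nat \<Rightarrow> real) \<Rightarrow> bool" where
  "aperiodic_chain n P \<longleftrightarrow> (\<forall>i<n. Gcd {k. 1 \<le> k \<and> nstep n P k i i > 0} = 1)"

definition prob_measure_on :: "nat \<Rightarrow> (nat \<Rightarrow> real) \<Rightarrow> bool" where
  "prob_measure_on n \<pi> \<longleftrightarrow> (\<forall>i<n. 0 \<le> \<pi> i) \<and> (\<Sum>i<n. \<pi> i) = 1"

definition reversible_wrt :: "nat \<Rightarrow> (nat \<Rightarrow> nat \<Rightarrow> real) \<Rightarrow> (nat \<Rightarrow> real) \<Rightarrow> bool" where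
  "reversible_wrt n P \<pi> \<longleftrightarrow> prob_measure_on n \<pi> \<and>
     (\<forall>i<n. \<forall>j<n. \<pi> i * P i j = \<pi> j * P j i)"

(* hit_at n P S k y x = Pr_y[T_S = k and X_k = x]  (T_S = inf{t>=0. X_t in S}) *)
fun hit_at :: "nat \<Rightarrow> (nat \<Rightarrow> nat \<Rightarrow> real) \<Rightarrow> nat set \<Rightarrow> nat \<Rightarrow> nat \<Rightarrow> nat \<Rightarrow> real" where
  "hit_at n P S 0 y x = (if y \<in> S \<and> y = x then 1 else 0)"
| "hit_at n P S (Suc k) y x =
     (if y \<in> S then 0 else (\<Sum>z<n. P y z * hit_at n P S k z x))"

(* harmonic measure on S from y: h_{y,S}(x) = Pr_y[X_{T_S} = x] *)
definition harm_from :: "nat \<Rightarrow> (nat \<Rightarrow> nat \<Rightarrow> real) \<Rightarrow> nat set \<Rightarrow> nat \<Rightarrow> nat \<Rightarrow> real" where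
  "harm_from n P S y x = (\<Sum>k. hit_at n P S k y x)"

definition harm :: "nat \<Rightarrow> (nat \<Rightarrow> nat \<Rightarrow> real) \<Rightarrow> (nat \<Rightarrow> real) \<Rightarrow> nat set \<Rightarrow> nat \<Rightarrow> real" where
  "harm n P \<pi> S x = (\<Sum>y<n. \<pi> y * harm_from n P S y x)"

definition eigenvalues_mset :: "nat \<Rightarrow> (nat \<Rightarrow> nat \<Rightarrow> real) \<Rightarrow> complex multiset" where
  "eigenvalues_mset n P = proots (char_poly (mat n n (\<lambda>(i,j). complex_of_real (P i j))))"

(* lambda = max_{j>1} |lambda_j|: remove one copy of lambda_1 = 1, take the maximal modulus
   of the rest (0 if there are no other eigenvalues) *)
definition slem :: "nat \<Rightarrow> (nat \<Rightarrow> nat \<Rightarrow> real) \<Rightarrow> real" where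
  "slem n P = Max (insert 0 (cmod ` set_mset (eigenvalues_mset n P - {#1#})))"

end

theory Submission
  imports Defs "Jordan_Normal_Form.Spectral_Radius"
begin

text \<open>Write \<open>T = 1_{S^c} P\<close> for the chain killed on entering \<open>S\<close>. Then
  \<open>h_S(A) = \<Sum>_k \<langle>1, T^k 1_A\<rangle>_\<pi>\<close>, the \<open>k\<close>-th term being \<open>Pr_\<pi>[T_S = k, X_k \<in> A] \<le> \<pi>(A)\<close>.
  After \<open>t\<close> free steps the spectral gap puts \<open>P^t 1_A\<close> within \<open>\<lambda>^t \<surd>\<pi>(A)\<close> of the constant
  \<open>\<pi>(A)\<close> in \<open>\<ell>^2(\<pi>)\<close>, while \<open>T\<close> contracts functions vanishing on \<open>S\<close> by the factor
  \<open>\<rho> = 1 - (1 - \<lambda>) \<pi>(S)\<close>. Hence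
  \<open>h_S(A) \<le> t \<pi>(A) + O((\<pi>(A) + \<lambda>^t \<surd>\<pi>(A)) / ((1 - \<lambda>) \<pi>(S)))\<close>, and the choice
  \<open>t \<approx> log(\<surd>\<pi>(A) / (\<epsilon> \<pi>(S))) / (1 - \<lambda>)\<close> gives the bound.

  The spectral input is that \<open>\<lambda> < 1\<close> bounds the norm of \<open>P\<close> on mean-zero functions.
  Reversibility makes \<open>P\<close> self-adjoint, so its eigenvalues are real; irreducibility makes the
  eigenvalue \<open>1\<close> simple and aperiodicity excludes \<open>-1\<close>.\<close>

section \<open>Characteristic polynomials of matrices with constant row sums\<close>

definition shear_mat :: "nat \<Rightarrow> 'a :: comm_ring_1 mat" where
  "shear_mat n = mat n n (\<lambda>(i,j). if j = 0 \<or> i = j then 1 else 0)"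

definition shear_inv_mat :: "nat \<Rightarrow> 'a :: comm_ring_1 mat" where
  "shear_inv_mat n = mat n n (\<lambda>(i,j). if j = 0 then (if i = 0 then 1 else -1) else if i = j then 1 else 0)"

lemma shear_mat_carrier [simp]:
  "shear_mat n \<in> carrier_mat n n" "shear_inv_mat n \<in> carrier_mat n n"
  unfolding shear_mat_def shear_inv_mat_def by auto

lemma shear_mat_mult_index:
  fixes X :: "'a :: comm_ring_1 mat"
  assumes "X \<in> carrier_mat n nc" "i < n" "j < nc"
  shows "(shear_mat n * X) $$ (i,j) = X $$ (0,j) + (if i = 0 then 0 else X $$ (i,j))"
proof -
  have "(shear_mat n * X) $$ (i,j) = (\<Sum>k<n. (if k = 0 \<or> i = k then 1 else 0) * X $$ (k,j))"
    using assms by (simp add: shear_mat_def scalar_prod_def atLeast0LessThan)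
  also have "\<dots> =
      (\<Sum>k<n. (if k = 0 then X $$ (k,j) else 0) + (if k = i \<and> i \<noteq> 0 then X $$ (k,j) else 0))"
    by (rule sum.cong) auto
  finally show ?thesis using assms by (simp add: sum.distrib)
qed

lemma shear_inv_mat_mult_index:
  fixes X :: "'a :: comm_ring_1 mat"
  assumes "X \<in> carrier_mat n nc" "i < n" "j < nc"
  shows "(shear_inv_mat n * X) $$ (i,j) = X $$ (i,j) - (if i = 0 then 0 else X $$ (0,j))"
proof -
  have "(shear_inv_mat n * X) $$ (i,j) =
      (\<Sum>k<n. (if k = 0 then (if i = 0 then 1 else -1) else if i = k then 1 else 0) * X $$ (k,j))"
    using assms by (simp add: shear_inv_mat_def scalar_prod_def atLeast0LessThan)
  also have "\<dots> =
      (\<Sum>k<n. (if k = i then X $$ (k,j) else 0) - (if k = 0 \<and> i \<noteq> 0 then X $$ (k,j) else 0))"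
    by (rule sum.cong) auto
  finally show ?thesis using assms by (simp add: sum_subtractf)
qed

lemma mult_shear_mat_index:
  fixes X :: "'a :: comm_ring_1 mat"
  assumes "X \<in> carrier_mat nr n" "i < nr" "j < n"
  shows "(X * shear_mat n) $$ (i,j) = (if j = 0 then (\<Sum>l<n. X $$ (i,l)) else X $$ (i,j))"
proof -
  have "(X * shear_mat n) $$ (i,j) = (\<Sum>k<n. X $$ (i,k) * (if j = 0 \<or> k = j then 1 else 0))"
    using assms by (simp add: shear_mat_def scalar_prod_def atLeast0LessThan)
  also have "\<dots> = (\<Sum>k<n. if j = 0 \<or> k = j then X $$ (i,k) else 0)"
    by (rule sum.cong) auto
  finally show ?thesis using assms by (cases "j = 0") auto
qed

lemma shear_mat_dim [simp]:
  "dim_row (shear_mat n) = n" "dim_col (shear_mat n) = n"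
  "dim_row (shear_inv_mat n) = n" "dim_col (shear_inv_mat n) = n"
  unfolding shear_mat_def shear_inv_mat_def by auto

lemma shear_mat_inverse:
  "shear_mat n * shear_inv_mat n = (1\<^sub>m n :: 'a :: comm_ring_1 mat)"
  "shear_inv_mat n * shear_mat n = (1\<^sub>m n :: 'a mat)"
proof (rule_tac [!] eq_matI)
  fix i j assume "i < dim_row (1\<^sub>m n :: 'a mat)" "j < dim_col (1\<^sub>m n :: 'a mat)"
  then have ij: "i < n" "j < n" by auto
  show "(shear_mat n * shear_inv_mat n) $$ (i,j) = (1\<^sub>m n :: 'a mat) $$ (i,j)"
    unfolding shear_mat_mult_index[OF shear_mat_carrier(2) ij] using ij
    by (auto simp: shear_inv_mat_def)
  show "(shear_inv_mat n * shear_mat n) $$ (i,j) = (1\<^sub>m n :: 'a mat) $$ (i,j)"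
    unfolding shear_inv_mat_mult_index[OF shear_mat_carrier(1) ij] using ij
    by (auto simp: shear_mat_def)
qed auto

lemma similar_mat_shear:
  fixes A :: "'a :: comm_ring_1 mat"
  assumes A: "A \<in> carrier_mat n n"
  shows "similar_mat A (shear_inv_mat n * A * shear_mat n)"
  by (rule similar_mat_sym, rule similar_matI[where n=n]) (use A shear_mat_inverse in auto)

lemma char_poly_1x1: "char_poly (mat 1 1 (\<lambda>_. c)) = [:-c, 1:]"
  by (simp add: char_poly_defs det_def sign_def)

text \<open>For constant row sums \<open>c\<close> the shear maps \<open>(1,\<dots>,1)\<close> to the first basis vector, so the
  conjugated matrix is block upper triangular with corner \<open>c\<close>.\<close>

lemma char_poly_const_row_sums:
  fixes M :: "'a :: comm_ring_1 mat"
  assumes M: "M \<in> carrier_mat n n" and n: "0 < n" and rows: "\<forall>k<n. (\<Sum>l<n. M $$ (k,l)) = c"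
  shows "char_poly M =
    [:-c, 1:] * char_poly (mat (n-1) (n-1) (\<lambda>(i,j). M $$ (Suc i, Suc j) - M $$ (0, Suc j)))"
proof -
  define B where "B = shear_inv_mat n * M * shear_mat n"
  define Q where "Q = mat (n-1) (n-1) (\<lambda>(i,j). M $$ (Suc i, Suc j) - M $$ (0, Suc j))"
  have MS: "M * shear_mat n \<in> carrier_mat n n" using M by simp
  have B_index: "B $$ (i,j) = (if i = 0 then (if j = 0 then c else M $$ (0,j))
      else (if j = 0 then 0 else M $$ (i,j) - M $$ (0,j)))" if "i < n" "j < n" for i j
  proof -
    have "B = shear_inv_mat n * (M * shear_mat n)"
      unfolding B_def using M by (simp add: assoc_mult_mat[of _ n n _ n _ n])
    then have "B $$ (i,j) = (M * shear_mat n) $$ (i,j) - (if i = 0 then 0 else (M * shear_mat n) $$ (0,j))"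
      using shear_inv_mat_mult_index[OF MS that] by simp
    then show ?thesis
      using that n rows by (simp add: mult_shear_mat_index[OF M] del: index_mult_mat)
  qed
  have B_blocks: "B = four_block_mat (mat 1 1 (\<lambda>_. c)) (mat 1 (n-1) (\<lambda>(_,j). B $$ (0, Suc j)))
      (0\<^sub>m (n-1) 1) Q"
    using n B_index by (intro eq_matI) (auto simp: Q_def B_def)
  have "char_poly B = char_poly (mat 1 1 (\<lambda>_. c)) * char_poly Q"
    by (subst B_blocks, rule char_poly_four_block_zeros_col) (auto simp: Q_def)
  moreover have "char_poly M = char_poly B"
    unfolding B_def by (rule char_poly_similar[OF similar_mat_shear[OF M]])
  ultimately show ?thesis unfolding char_poly_1x1 Q_def by simp
qed

lemma smult_mat_mult_vec:
  "M \<in> carrier_mat n n \<Longrightarrow> v \<in> carrier_vec n \<Longrightarrow>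
    (c \<cdot>\<^sub>m M) *\<^sub>v v = (c :: 'a :: comm_ring_1) \<cdot>\<^sub>v (M *\<^sub>v v)"
  by (intro eq_vecI) auto

lemma pow_mat_smult:
  "M \<in> carrier_mat n n \<Longrightarrow> (c \<cdot>\<^sub>m M) ^\<^sub>m k = (c :: 'a :: comm_ring_1) ^ k \<cdot>\<^sub>m (M ^\<^sub>m k)"
  by (induction k) (auto intro!: eq_matI simp: mult_smult_assoc_mat mult_smult_distrib)

lemma pow_mat_index_bound:
  fixes M :: "complex mat"
  assumes M: "M \<in> carrier_mat n n" and n: "0 < n" and ev: "\<And>z. eigenvalue M z \<Longrightarrow> cmod z < \<rho>"
  shows "\<exists>c. \<forall>k i j. i < n \<longrightarrow> j < n \<longrightarrow> cmod ((M ^\<^sub>m k) $$ (i,j)) \<le> c * \<rho> ^ k"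
proof -
  have "spectral_radius M \<in> cmod ` spectrum M" by (rule spectral_radius_mem_max(1)[OF M n])
  then obtain z where "eigenvalue M z" unfolding spectrum_def by auto
  then have \<rho>: "\<rho> > 0" using ev[of z] norm_ge_zero[of z] by linarith
  define A where "A = complex_of_real (1/\<rho>) \<cdot>\<^sub>m M"
  have A: "A \<in> carrier_mat n n" unfolding A_def using M by simp
  have M_A: "M = complex_of_real \<rho> \<cdot>\<^sub>m A"
    unfolding A_def using \<rho> by (auto intro!: eq_matI simp flip: of_real_mult)
  have "spectral_radius A \<in> cmod ` spectrum A" by (rule spectral_radius_mem_max(1)[OF A n])
  then obtain \<mu> v where \<mu>: "spectral_radius A = cmod \<mu>"
    and v: "v \<in> carrier_vec n" "v \<noteq> 0\<^sub>v n" "A *\<^sub>v v = \<mu> \<cdot>\<^sub>v v"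
    using A unfolding spectrum_def eigenvalue_def eigenvector_def by auto
  have "M *\<^sub>v v = (complex_of_real \<rho> * \<mu>) \<cdot>\<^sub>v v"
    unfolding M_A smult_mat_mult_vec[OF A v(1)] v(3) by (simp add: smult_smult_assoc)
  then have "eigenvalue M (complex_of_real \<rho> * \<mu>)"
    unfolding eigenvalue_def eigenvector_def using M v by auto
  from ev[OF this] have "\<rho> * cmod \<mu> < \<rho> * 1" using \<rho> by (simp add: norm_mult)
  then have "spectral_radius A < 1" using \<mu> \<rho> by simp
  then obtain c where c: "\<forall>k. norm_bound (A ^\<^sub>m k) c"
    using spectral_radius_jnf_norm_bound_less_1_upper_triangular[OF A] by auto
  have "cmod ((M ^\<^sub>m k) $$ (i,j)) \<le> c * \<rho> ^ k" if "i < n" "j < n" for k i j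
  proof -
    have "cmod ((M ^\<^sub>m k) $$ (i,j)) = \<rho> ^ k * cmod ((A ^\<^sub>m k) $$ (i,j))"
      unfolding M_A pow_mat_smult[OF A] using that A \<rho> by (simp add: norm_mult norm_power)
    also have "\<dots> \<le> \<rho> ^ k * c"
      using c that A \<rho> unfolding norm_bound_def by (intro mult_left_mono) auto
    finally show ?thesis by (simp add: mult.commute)
  qed
  then show ?thesis by blast
qed

section \<open>Spectrum of a reversible chain\<close>

lemma sum_sum_nonneg_eq_0_imp:
  fixes F :: "'a \<Rightarrow> 'b \<Rightarrow> real"
  assumes "finite I" "finite J" "\<And>i j. i \<in> I \<Longrightarrow> j \<in> J \<Longrightarrow> 0 \<le> F i j"
    and "(\<Sum>i\<in>I. \<Sum>j\<in>J. F i j) = 0" "i \<in> I" "j \<in> J"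
  shows "F i j = 0"
proof -
  have "(\<Sum>j\<in>J. F i j) = 0"
    using assms by (subst (asm) sum_nonneg_eq_0_iff) (auto intro!: sum_nonneg)
  then show ?thesis using assms by (subst (asm) sum_nonneg_eq_0_iff) auto
qed

lemma bounded_power2_powers_imp_le_1:
  fixes x :: real
  assumes "\<And>m. x ^ (2 ^ m) \<le> C"
  shows "x \<le> 1"
proof (rule ccontr)
  assume "\<not> x \<le> 1"
  then have x: "x > 1" by simp
  then obtain m where "C < x ^ m" using real_arch_pow by blast
  also have "\<dots> \<le> x ^ (2 ^ m)" using x by (intro power_increasing) (auto intro: less_imp_le less_exp)
  finally show False using assms[of m] by simp
qed

locale reversible_chain =
  fixes n :: nat and P :: "nat \<Rightarrow> nat \<Rightarrow> real" and \<pi> :: "nat \<Rightarrow> real"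
  assumes stochastic: "stochastic n P" and irreducible: "irreducible_chain n P"
    and aperiodic: "aperiodic_chain n P" and reversible: "reversible_wrt n P \<pi>"
begin

lemma P_nonneg: "i < n \<Longrightarrow> j < n \<Longrightarrow> 0 \<le> P i j"
  using stochastic unfolding stochastic_def by auto

lemma P_row_sum: "i < n \<Longrightarrow> (\<Sum>j<n. P i j) = 1"
  using stochastic unfolding stochastic_def by auto

lemma pi_nonneg: "i < n \<Longrightarrow> 0 \<le> \<pi> i"
  using reversible unfolding reversible_wrt_def prob_measure_on_def by auto

lemma pi_sum: "(\<Sum>i<n. \<pi> i) = 1"
  using reversible unfolding reversible_wrt_def prob_measure_on_def by auto

lemma detailed_balance: "i < n \<Longrightarrow> j < n \<Longrightarrow> \<pi> i * P i j = \<pi> j * P j i"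
  using reversible unfolding reversible_wrt_def by auto

lemma n_pos: "0 < n"
  using pi_sum by (cases n) auto

lemma pi_stationary: assumes "j < n" shows "(\<Sum>i<n. \<pi> i * P i j) = \<pi> j"
proof -
  have "(\<Sum>i<n. \<pi> i * P i j) = (\<Sum>i<n. \<pi> j * P j i)"
    using detailed_balance assms by (intro sum.cong) auto
  also have "\<dots> = \<pi> j" using P_row_sum[OF assms] by (simp flip: sum_distrib_left)
  finally show ?thesis .
qed

lemma nstep_nonneg: "i < n \<Longrightarrow> 0 \<le> nstep n P k i j"
  by (induction k arbitrary: i) (auto intro!: sum_nonneg mult_nonneg_nonneg P_nonneg)

lemma nstep_Suc_posE:
  assumes "nstep n P (Suc k) i j > 0" "i < n"
  obtains l where "l < n" "P i l > 0" "nstep n P k l j > 0"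
proof -
  from assms(1) have "0 < (\<Sum>l<n. P i l * nstep n P k l j)" by simp
  then obtain l where l: "l < n" "0 < P i l * nstep n P k l j"
    by (metis (no_types, lifting) lessThan_iff not_le sum_nonpos)
  moreover have "0 \<le> P i l" "0 \<le> nstep n P k l j"
    using P_nonneg[OF assms(2) l(1)] nstep_nonneg[OF l(1)] by auto
  ultimately show thesis using that by (auto simp: zero_less_mult_iff)
qed

lemma scaling_along_paths:
  fixes g :: "nat \<Rightarrow> real"
  assumes edge: "\<And>a b. a < n \<Longrightarrow> b < n \<Longrightarrow> P a b > 0 \<Longrightarrow> g b = r * g a"
  shows "i < n \<Longrightarrow> nstep n P k i j > 0 \<Longrightarrow> g j = r ^ k * g i"
proof (induction k arbitrary: i)
  case 0 then show ?case by (simp split: if_splits)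
next
  case (Suc k i)
  then obtain l where l: "l < n" "P i l > 0" "nstep n P k l j > 0"
    by (blast elim: nstep_Suc_posE)
  then have "g j = r ^ k * g l" using Suc by auto
  also have "g l = r * g i" using edge[OF Suc(2) l(1,2)] .
  finally show ?case by (simp add: mult_ac)
qed

lemma pi_pos: assumes i: "i < n" shows "\<pi> i > 0"
proof (rule ccontr)
  assume "\<not> \<pi> i > 0"
  with pi_nonneg[OF i] have "\<pi> i = 0" by auto
  then have vanish: "\<pi> j = 0" if "j < n" "nstep n P k j i > 0" for k j
    using that
  proof (induction k arbitrary: j)
    case 0 then show ?case by (simp split: if_splits)
  next
    case (Suc k j)
    then obtain l where l: "l < n" "P j l > 0" "nstep n P k l i > 0"
      by (blast elim: nstep_Suc_posE)
    with Suc have "\<pi> j * P j l = 0" using detailed_balance[OF Suc(3) l(1)] by simp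
    then show ?case using l by simp
  qed
  have "\<pi> j = 0" if "j < n" for j
    using irreducible that i vanish unfolding irreducible_chain_def by blast
  then show False using pi_sum by simp
qed

definition Pop :: "(nat \<Rightarrow> real) \<Rightarrow> nat \<Rightarrow> real" where
  "Pop g = (\<lambda>i. \<Sum>j<n. P i j * g j)"

definition inner_pi :: "(nat \<Rightarrow> real) \<Rightarrow> (nat \<Rightarrow> real) \<Rightarrow> real" where
  "inner_pi f g = (\<Sum>i<n. \<pi> i * f i * g i)"

lemma inner_pi_commute: "inner_pi f g = inner_pi g f"
  unfolding inner_pi_def by (simp add: mult_ac)

lemma inner_pi_cong:
  "(\<And>i. i < n \<Longrightarrow> f i = f' i) \<Longrightarrow> (\<And>i. i < n \<Longrightarrow> g i = g' i) \<Longrightarrow> inner_pi f g = inner_pi f' g'"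
  unfolding inner_pi_def by (intro sum.cong) auto

lemma inner_pi_add_left: "inner_pi (\<lambda>i. f i + g i) h = inner_pi f h + inner_pi g h"
  and inner_pi_add_right: "inner_pi h (\<lambda>i. f i + g i) = inner_pi h f + inner_pi h g"
  and inner_pi_diff_left: "inner_pi (\<lambda>i. f i - g i) h = inner_pi f h - inner_pi g h"
  and inner_pi_diff_right: "inner_pi h (\<lambda>i. f i - g i) = inner_pi h f - inner_pi h g"
  and inner_pi_scale_left: "inner_pi (\<lambda>i. c * f i) h = c * inner_pi f h"
  and inner_pi_scale_right: "inner_pi h (\<lambda>i. c * f i) = c * inner_pi h f"
  unfolding inner_pi_def
  by (simp_all add: algebra_simps sum.distrib sum_subtractf sum_distrib_left)

lemma inner_pi_self_nonneg: "0 \<le> inner_pi f f"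
  unfolding inner_pi_def using pi_nonneg by (auto intro!: sum_nonneg simp: mult.assoc)

lemma Pop_self_adjoint: "inner_pi f (Pop g) = inner_pi (Pop f) g"
proof -
  have "inner_pi f (Pop g) = (\<Sum>i<n. \<Sum>j<n. \<pi> i * P i j * f i * g j)"
    unfolding inner_pi_def Pop_def by (simp add: sum_distrib_left mult_ac)
  also have "\<dots> = (\<Sum>j<n. \<Sum>i<n. \<pi> i * P i j * f i * g j)" by (rule sum.swap)
  also have "\<dots> = (\<Sum>j<n. \<Sum>i<n. \<pi> j * P j i * f i * g j)"
    using detailed_balance by (intro sum.cong refl) auto
  also have "\<dots> = inner_pi (Pop f) g"
    unfolding inner_pi_def Pop_def by (simp add: sum_distrib_left sum_distrib_right mult_ac)
  finally show ?thesis .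
qed

lemma dirichlet_form:
  "(\<Sum>i<n. \<Sum>j<n. \<pi> i * P i j * (g i - r * g j)^2) =
    (1 + r^2) * inner_pi g g - 2 * r * inner_pi g (Pop g)"
proof -
  have rows: "(\<Sum>i<n. \<Sum>j<n. \<pi> i * P i j * (g i)^2) = inner_pi g g"
    unfolding inner_pi_def using P_row_sum
    by (simp flip: sum_distrib_left sum_distrib_right add: power2_eq_square mult_ac)
  have "(\<Sum>i<n. \<Sum>j<n. \<pi> i * P i j * (g j)^2) = (\<Sum>j<n. \<Sum>i<n. \<pi> i * P i j * (g j)^2)"
    by (rule sum.swap)
  also have "\<dots> = (\<Sum>j<n. (\<Sum>i<n. \<pi> i * P i j) * (g j)^2)"
    by (simp add: sum_distrib_right)
  also have "\<dots> = inner_pi g g"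
    unfolding inner_pi_def using pi_stationary by (intro sum.cong) (auto simp: power2_eq_square)
  finally have cols: "(\<Sum>i<n. \<Sum>j<n. \<pi> i * P i j * (g j)^2) = inner_pi g g" .
  have cross: "(\<Sum>i<n. \<Sum>j<n. \<pi> i * P i j * (g i * g j)) = inner_pi g (Pop g)"
    unfolding inner_pi_def Pop_def by (simp add: sum_distrib_left mult_ac)
  have "\<pi> i * P i j * (g i - r * g j)^2 =
      \<pi> i * P i j * (g i)^2 + r^2 * (\<pi> i * P i j * (g j)^2) - 2 * r * (\<pi> i * P i j * (g i * g j))"
    for i j by (simp add: power2_eq_square algebra_simps)
  then have "(\<Sum>i<n. \<Sum>j<n. \<pi> i * P i j * (g i - r * g j)^2) =
      (\<Sum>i<n. \<Sum>j<n. \<pi> i * P i j * (g i)^2) + r^2 * (\<Sum>i<n. \<Sum>j<n. \<pi> i * P i j * (g j)^2)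
      - 2 * r * (\<Sum>i<n. \<Sum>j<n. \<pi> i * P i j * (g i * g j))"
    by (simp add: sum_subtractf sum.distrib sum_distrib_left)
  then show ?thesis using rows cols cross by (simp add: algebra_simps)
qed

text \<open>For eigenvalues \<open>\<plusminus>1\<close> the Dirichlet form above vanishes, forcing every edge term to
  vanish.\<close>

lemma unit_eigenfunction_edge:
  assumes eig: "\<forall>i<n. Pop g i = r * g i" and r: "r^2 = 1"
    and ab: "a < n" "b < n" "P a b > 0"
  shows "g b = r * g a"
proof -
  have "inner_pi g (Pop g) = inner_pi g (\<lambda>i. r * g i)"
    by (rule inner_pi_cong) (use eig in auto)
  then have "(\<Sum>i<n. \<Sum>j<n. \<pi> i * P i j * (g i - r * g j)^2) = (1 - r^2) * inner_pi g g"
    unfolding dirichlet_form inner_pi_scale_right by (simp add: power2_eq_square algebra_simps)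
  then have "(\<Sum>i<n. \<Sum>j<n. \<pi> i * P i j * (g i - r * g j)^2) = 0"
    using r by simp
  then have "\<pi> a * P a b * (g a - r * g b)^2 = 0"
    using ab pi_nonneg P_nonneg
    by (intro sum_sum_nonneg_eq_0_imp[where F = "\<lambda>i j. \<pi> i * P i j * (g i - r * g j)^2"]) auto
  then have "g a = r * g b" using pi_pos[OF ab(1)] ab(3) by simp
  then have "r * g a = r^2 * g b" by (simp add: power2_eq_square)
  then show ?thesis using r by simp
qed

lemma harmonic_const:
  assumes "\<forall>i<n. Pop g i = g i" "i < n" "j < n"
  shows "g j = g i"
proof -
  have edge: "g b = 1 * g a" if "a < n" "b < n" "P a b > 0" for a b
    using unit_eigenfunction_edge[of g 1 a b] assms(1) that by simp
  obtain k where "nstep n P k i j > 0"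
    using irreducible assms(2,3) unfolding irreducible_chain_def by blast
  from scaling_along_paths[OF edge assms(2) this] show ?thesis by simp
qed

lemma antiharmonic_eq_0:
  assumes eig: "\<forall>i<n. Pop g i = - g i" and i: "i < n"
  shows "g i = 0"
proof (rule ccontr)
  assume gi: "g i \<noteq> 0"
  have edge: "g b = (-1) * g a" if "a < n" "b < n" "P a b > 0" for a b
    using unit_eigenfunction_edge[of g "-1" a b] eig that by simp
  define K where "K = {k. 1 \<le> k \<and> nstep n P k i i > 0}"
  have "2 dvd k" if "k \<in> K" for k
  proof -
    have "nstep n P k i i > 0" using that unfolding K_def by auto
    from scaling_along_paths[OF edge i this] have "g i = (-1)^k * g i" .
    with gi have "(-1::real)^k = 1" by simp
    then show "2 dvd k" by (metis neg_one_odd_power one_neq_neg_one)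
  qed
  then have "2 dvd Gcd K" by (intro Gcd_greatest) auto
  moreover have "Gcd K = 1" using aperiodic i unfolding aperiodic_chain_def K_def by auto
  ultimately show False by simp
qed

definition mean :: "(nat \<Rightarrow> real) \<Rightarrow> real" where
  "mean g = (\<Sum>i<n. \<pi> i * g i)"

lemma eigenvalue_abs_le_1:
  assumes eig: "\<forall>i<n. Pop g i = r * g i" and k: "k < n" "g k \<noteq> 0"
  shows "\<bar>r\<bar> \<le> 1"
proof -
  define M where "M = Max ((\<lambda>i. \<bar>g i\<bar>) ` {..<n})"
  have le: "\<bar>g i\<bar> \<le> M" if "i < n" for i unfolding M_def using that by (intro Max_ge) auto
  have "M \<in> (\<lambda>i. \<bar>g i\<bar>) ` {..<n}" unfolding M_def using k by (intro Max_in) auto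
  then obtain m where m: "m < n" "\<bar>g m\<bar> = M" by auto
  have "\<bar>r\<bar> * M = \<bar>\<Sum>j<n. P m j * g j\<bar>" using eig m by (simp add: Pop_def abs_mult)
  also have "\<dots> \<le> (\<Sum>j<n. P m j * M)"
    using P_nonneg[OF m(1)] le by (intro sum_abs[THEN order_trans] sum_mono) (auto simp: abs_mult mult_left_mono)
  also have "\<dots> = M" using P_row_sum[OF m(1)] by (simp flip: sum_distrib_right)
  finally have "\<bar>r\<bar> * M \<le> 1 * M" by simp
  moreover have "M > 0" using le[OF k(1)] k(2) by linarith
  ultimately show ?thesis by (rule mult_right_le_imp_le)
qed

lemma mean_zero_eigenvalue_abs_less_1:
  assumes eig: "\<forall>i<n. Pop g i = r * g i" and mean: "mean g = 0" and k: "k < n" "g k \<noteq> 0"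
  shows "\<bar>r\<bar> < 1"
proof -
  have "r \<noteq> -1" using antiharmonic_eq_0[of g k] eig k by auto
  moreover have "r \<noteq> 1"
  proof
    assume "r = 1"
    then have "g i = g k" if "i < n" for i using harmonic_const[of g k i] eig k that by simp
    then have "mean g = g k" unfolding mean_def using pi_sum by (simp flip: sum_distrib_right)
    with mean k show False by simp
  qed
  ultimately show ?thesis using eigenvalue_abs_le_1[OF eig k] by auto
qed

text \<open>Reversibility makes \<open>H = \<Sum> \<pi>_i P_ij conj(f_i) f_j\<close> self-conjugate, while
  \<open>H = z \<Sum> \<pi>_i |f_i|^2\<close>; hence \<open>z\<close> is real.\<close>

lemma complex_eigenvector_real_part:
  fixes f :: "nat \<Rightarrow> complex"
  assumes eig: "\<forall>i<n. (\<Sum>j<n. complex_of_real (P i j) * f j) = z * f i"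
    and mean: "(\<Sum>i<n. complex_of_real (\<pi> i) * f i) = 0" and k: "k < n" "f k \<noteq> 0"
  obtains g where "\<forall>i<n. Pop g i = Re z * g i" "mean g = 0" "g k \<noteq> 0" "Im z = 0"
proof -
  define H where "H = (\<Sum>i<n. \<Sum>j<n. complex_of_real (\<pi> i * P i j) * (cnj (f i) * f j))"
  define N where "N = (\<Sum>i<n. \<pi> i * (cmod (f i))^2)"
  have "H = (\<Sum>i<n. complex_of_real (\<pi> i) * cnj (f i) * (\<Sum>j<n. complex_of_real (P i j) * f j))"
    unfolding H_def by (simp add: sum_distrib_left mult_ac)
  also have "\<dots> = z * (\<Sum>i<n. complex_of_real (\<pi> i) * (cnj (f i) * f i))"
    using eig by (simp add: sum_distrib_left mult_ac)
  also have "\<dots> = z * complex_of_real N"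
    unfolding N_def by (simp add: complex_mult_cnj cmod_def power2_eq_square mult_ac)
  finally have H_N: "H = z * complex_of_real N" .
  have "cnj H = (\<Sum>j<n. \<Sum>i<n. complex_of_real (\<pi> i * P i j) * (f i * cnj (f j)))"
    unfolding H_def by (simp add: mult_ac) (rule sum.swap)
  also have "\<dots> = H"
    unfolding H_def using detailed_balance by (intro sum.cong refl) (auto simp: mult_ac)
  finally have "cnj H = H" .
  moreover have "N > 0"
  proof -
    have "\<pi> k * (cmod (f k))^2 \<le> N"
      unfolding N_def using k pi_nonneg by (intro member_le_sum) auto
    moreover have "0 < \<pi> k * (cmod (f k))^2" using pi_pos[OF k(1)] k(2) by simp
    ultimately show ?thesis by linarith
  qed
  ultimately have "cnj z = z" using H_N by simp
  then have real: "Im z = 0" by (metis Reals_cnj_iff complex_is_Real_iff)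
  have Re_eig: "\<forall>i<n. Pop (\<lambda>j. Re (f j)) i = Re z * Re (f i)"
    and Im_eig: "\<forall>i<n. Pop (\<lambda>j. Im (f j)) i = Re z * Im (f i)"
    using eig real by (auto simp: Pop_def complex_eq_iff Re_sum Im_sum dest!: spec)
  have "mean (\<lambda>j. Re (f j)) = 0" "mean (\<lambda>j. Im (f j)) = 0"
    using arg_cong[OF mean, of Re] arg_cong[OF mean, of Im] by (simp_all add: mean_def Re_sum Im_sum)
  moreover have "Re (f k) \<noteq> 0 \<or> Im (f k) \<noteq> 0" using k(2) complex_eq_iff by auto
  ultimately show thesis using that Re_eig Im_eig real by blast
qed

text \<open>\<open>Rmat = P - \<one>\<pi>\<close> acts as \<open>P\<close> on mean-zero vectors and annihilates constants. Both
  matrices have constant row sums, and \<open>Qmat\<close> is their common block left after splitting off the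
  row sum: the spectrum of \<open>Rmat\<close> is that of \<open>P\<close> with one eigenvalue \<open>1\<close> replaced by \<open>0\<close>.\<close>

definition Pmat :: "complex mat" where
  "Pmat = mat n n (\<lambda>(i,j). complex_of_real (P i j))"

definition Rmat :: "complex mat" where
  "Rmat = mat n n (\<lambda>(i,j). complex_of_real (P i j - \<pi> j))"

definition Qmat :: "complex mat" where
  "Qmat = mat (n-1) (n-1) (\<lambda>(i,j). complex_of_real (P (Suc i) (Suc j) - P 0 (Suc j)))"

lemma Pmat_carrier: "Pmat \<in> carrier_mat n n"
  and Rmat_carrier: "Rmat \<in> carrier_mat n n"
  and Qmat_carrier: "Qmat \<in> carrier_mat (n-1) (n-1)"
  unfolding Pmat_def Rmat_def Qmat_def by auto

lemma char_poly_Pmat: "char_poly Pmat = [:-1, 1:] * char_poly Qmat"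
proof -
  have "\<forall>k<n. (\<Sum>l<n. Pmat $$ (k,l)) = 1"
    using P_row_sum by (simp add: Pmat_def flip: of_real_sum)
  moreover have "mat (n-1) (n-1) (\<lambda>(i,j). Pmat $$ (Suc i, Suc j) - Pmat $$ (0, Suc j)) = Qmat"
    unfolding Qmat_def Pmat_def by (rule eq_matI) auto
  ultimately show ?thesis using char_poly_const_row_sums[OF Pmat_carrier n_pos, of 1] by simp
qed

lemma char_poly_Rmat: "char_poly Rmat = [:0, 1:] * char_poly Qmat"
proof -
  have "\<forall>k<n. (\<Sum>l<n. Rmat $$ (k,l)) = 0"
    using P_row_sum pi_sum by (simp add: Rmat_def sum_subtractf flip: of_real_sum)
  moreover have "mat (n-1) (n-1) (\<lambda>(i,j). Rmat $$ (Suc i, Suc j) - Rmat $$ (0, Suc j)) = Qmat"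
    unfolding Qmat_def Rmat_def by (rule eq_matI) auto
  ultimately show ?thesis using char_poly_const_row_sums[OF Rmat_carrier n_pos, of 0] by simp
qed

lemma char_poly_Qmat_nonzero: "char_poly Qmat \<noteq> 0"
  using degree_monic_char_poly[OF Qmat_carrier] by auto

lemma slem_eq_Qmat: "slem n P = Max (insert 0 (cmod ` set_mset (proots (char_poly Qmat))))"
proof -
  have "eigenvalues_mset n P = {#1#} + proots (char_poly Qmat)"
    unfolding eigenvalues_mset_def Pmat_def[symmetric] char_poly_Pmat
    using char_poly_Qmat_nonzero by (subst proots_mult) auto
  then show ?thesis unfolding slem_def by simp
qed

lemma slem_nonneg: "0 \<le> slem n P"
  unfolding slem_eq_Qmat by (rule Max_ge) auto

lemma Rmat_eigenvalue_abs_less_1: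
  assumes "eigenvalue Rmat z" "z \<noteq> 0"
  shows "cmod z < 1"
proof -
  obtain v where v: "v \<in> carrier_vec n" "v \<noteq> 0\<^sub>v n" "Rmat *\<^sub>v v = z \<cdot>\<^sub>v v"
    using assms(1) Rmat_carrier unfolding eigenvalue_def eigenvector_def by auto
  define f where "f i = v $ i" for i
  define m where "m = (\<Sum>j<n. complex_of_real (\<pi> j) * f j)"
  have Rf: "(\<Sum>j<n. complex_of_real (P i j) * f j) - m = z * f i" if "i < n" for i
  proof -
    have "z * f i = (\<Sum>j<n. complex_of_real (P i j - \<pi> j) * f j)"
      using arg_cong[OF v(3), of "\<lambda>w. w $ i"] that v(1)
      by (simp add: Rmat_def f_def scalar_prod_def atLeast0LessThan)
    then show ?thesis unfolding m_def by (simp add: algebra_simps sum_subtractf)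
  qed
  have "(\<Sum>i<n. complex_of_real (\<pi> i) * (\<Sum>j<n. complex_of_real (P i j) * f j))
      = (\<Sum>j<n. complex_of_real (\<Sum>i<n. \<pi> i * P i j) * f j)"
    by (simp add: sum_distrib_left sum_distrib_right mult_ac) (rule sum.swap)
  also have "\<dots> = m" unfolding m_def using pi_stationary by (intro sum.cong) auto
  finally have "(\<Sum>i<n. complex_of_real (\<pi> i) * ((\<Sum>j<n. complex_of_real (P i j) * f j) - m)) = 0"
    using pi_sum by (simp add: right_diff_distrib sum_subtractf flip: sum_distrib_right of_real_sum)
  then have "z * m = 0" using Rf unfolding m_def by (simp add: sum_distrib_left mult_ac)
  then have m0: "m = 0" using assms(2) by simp
  obtain k where k: "k < n" "f k \<noteq> 0"
    using v(1,2) unfolding f_def by (metis eq_vecI index_zero_vec carrier_vecD)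
  have "\<forall>i<n. (\<Sum>j<n. complex_of_real (P i j) * f j) = z * f i" using Rf m0 by simp
  from complex_eigenvector_real_part[OF this m0[unfolded m_def] k] obtain g
    where "\<forall>i<n. Pop g i = Re z * g i" "mean g = 0" "g k \<noteq> 0" "Im z = 0" .
  with mean_zero_eigenvalue_abs_less_1[of g "Re z" k] k(1) show ?thesis
    by (simp add: cmod_def)
qed

lemma Rmat_eigenvalue_le_slem:
  assumes "eigenvalue Rmat z" shows "cmod z \<le> slem n P"
proof -
  have "poly (char_poly Rmat) z = 0" using eigenvalue_root_char_poly[OF Rmat_carrier] assms by simp
  then have "z = 0 \<or> z \<in># proots (char_poly Qmat)"
    using char_poly_Qmat_nonzero unfolding char_poly_Rmat by auto
  then show ?thesis unfolding slem_eq_Qmat by (auto intro!: Max_ge)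
qed

lemma slem_less_1: "slem n P < 1"
proof -
  have "x < 1" if x: "x \<in> insert 0 (cmod ` set_mset (proots (char_poly Qmat)))" for x
  proof -
    consider "x = 0" | z where "z \<in># proots (char_poly Qmat)" "x = cmod z"
      using x by auto
    then show "x < 1"
    proof cases
      case 2
      then have "eigenvalue Rmat z" using char_poly_Qmat_nonzero
        using eigenvalue_root_char_poly[OF Rmat_carrier] unfolding char_poly_Rmat by simp
      then show ?thesis using Rmat_eigenvalue_abs_less_1 2 by (cases "z = 0") auto
    qed simp
  qed
  then show ?thesis unfolding slem_eq_Qmat by (subst Max_less_iff) auto
qed

lemma Rmat_pow_index_bound:
  assumes "\<rho> > slem n P"
  shows "\<exists>c. \<forall>k i j. i < n \<longrightarrow> j < n \<longrightarrow> cmod ((Rmat ^\<^sub>m k) $$ (i,j)) \<le> c * \<rho> ^ k"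
  using pow_mat_index_bound[OF Rmat_carrier n_pos] Rmat_eigenvalue_le_slem assms
  by (meson order_le_less_trans)

section \<open>The spectral gap in \<open>\<ell>^2(\<pi>)\<close>\<close>

lemma mean_Pop: "mean (Pop g) = mean g"
proof -
  have "mean (Pop g) = (\<Sum>j<n. (\<Sum>i<n. \<pi> i * P i j) * g j)"
    unfolding mean_def Pop_def by (simp add: sum_distrib_left sum_distrib_right mult_ac) (rule sum.swap)
  also have "\<dots> = mean g" unfolding mean_def using pi_stationary by (intro sum.cong) auto
  finally show ?thesis .
qed

lemma mean_Pop_iter: "mean ((Pop ^^ k) g) = mean g"
  by (induction k) (auto simp: mean_Pop)

lemma Pop_cong: "(\<And>j. j < n \<Longrightarrow> g j = h j) \<Longrightarrow> Pop g = Pop h"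
  unfolding Pop_def by (intro ext sum.cong) auto

lemma Pop_add: "Pop (\<lambda>i. f i + g i) = (\<lambda>i. Pop f i + Pop g i)"
  and Pop_diff: "Pop (\<lambda>i. f i - g i) = (\<lambda>i. Pop f i - Pop g i)"
  unfolding Pop_def by (simp_all add: algebra_simps sum.distrib sum_subtractf)

lemma Pop_add_const: "i < n \<Longrightarrow> Pop (\<lambda>j. c + g j) i = c + Pop g i"
  unfolding Pop_def using P_row_sum by (simp add: distrib_left sum.distrib flip: sum_distrib_right)

lemma Pop_const: "i < n \<Longrightarrow> Pop (\<lambda>_. c) i = c"
  unfolding Pop_def using P_row_sum by (simp flip: sum_distrib_right)

lemma Pop_mono: "(\<And>j. j < n \<Longrightarrow> f j \<le> g j) \<Longrightarrow> i < n \<Longrightarrow> Pop f i \<le> Pop g i"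
  unfolding Pop_def using P_nonneg by (intro sum_mono mult_left_mono) auto

lemma Pop_nonneg: "(\<And>j. j < n \<Longrightarrow> 0 \<le> f j) \<Longrightarrow> i < n \<Longrightarrow> 0 \<le> Pop f i"
  using Pop_mono[of "\<lambda>_. 0" f i] by (simp add: Pop_def)

lemma Pop_iter_add_const: "i < n \<Longrightarrow> (Pop ^^ t) (\<lambda>j. c + g j) i = c + (Pop ^^ t) g i"
proof (induction t arbitrary: i)
  case (Suc t i)
  have "(Pop ^^ Suc t) (\<lambda>j. c + g j) i = Pop (\<lambda>j. c + (Pop ^^ t) g j) i"
    using Suc.IH by (simp cong: Pop_cong)
  also have "\<dots> = c + (Pop ^^ Suc t) g i" using Suc.prems by (simp add: Pop_add_const)
  finally show ?case .
qed simp

lemma Pop_iter_Rmat: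
  assumes "mean g = 0" "i < n"
  shows "(Pop ^^ k) g i = (\<Sum>j<n. Re ((Rmat ^\<^sub>m k) $$ (i,j)) * g j)"
  using assms
proof (induction k arbitrary: g)
  case 0
  have "(\<Sum>j<n. Re ((Rmat ^\<^sub>m 0) $$ (i,j)) * g j) = (\<Sum>j<n. if j = i then g j else 0)"
    using 0 Rmat_carrier by (intro sum.cong) auto
  then show ?case using 0 by simp
next
  case (Suc k g)
  have Rk: "Rmat ^\<^sub>m k \<in> carrier_mat n n" using Rmat_carrier by simp
  have Rk_index: "Re ((Rmat ^\<^sub>m Suc k) $$ (i,j)) = (\<Sum>l<n. Re ((Rmat ^\<^sub>m k) $$ (i,l)) * (P l j - \<pi> j))"
    if "j < n" for j
    using Rk Suc.prems(2) that Rmat_carrier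
    by (simp add: Rmat_def scalar_prod_def atLeast0LessThan Re_sum)
  have "(Pop ^^ Suc k) g i = (Pop ^^ k) (Pop g) i" by (simp only: funpow_Suc_right o_apply)
  also have "\<dots> = (\<Sum>l<n. Re ((Rmat ^\<^sub>m k) $$ (i,l)) * Pop g l)"
    using Suc mean_Pop by simp
  also have "\<dots> = (\<Sum>l<n. Re ((Rmat ^\<^sub>m k) $$ (i,l)) * (Pop g l - mean g))"
    using Suc.prems(1) by simp
  also have "\<dots> = (\<Sum>l<n. \<Sum>j<n. Re ((Rmat ^\<^sub>m k) $$ (i,l)) * (P l j - \<pi> j) * g j)"
    unfolding Pop_def mean_def
    by (intro sum.cong refl) (simp add: sum_distrib_left sum_distrib_right sum_subtractf algebra_simps)
  also have "\<dots> = (\<Sum>j<n. Re ((Rmat ^\<^sub>m Suc k) $$ (i,j)) * g j)"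
    by (subst sum.swap, rule sum.cong[OF refl]) (simp add: Rk_index sum_distrib_right del: pow_mat.simps)
  finally show ?case .
qed

lemma inner_pi_Cauchy_Schwarz: "(inner_pi f h)^2 \<le> inner_pi f f * inner_pi h h"
proof -
  have "0 \<le> (\<Sum>i<n. \<Sum>j<n. \<pi> i * \<pi> j * (f i * h j - f j * h i)^2)"
    using pi_nonneg by (intro sum_nonneg) auto
  also have "\<dots> = (\<Sum>i<n. \<Sum>j<n. (\<pi> i * f i * f i) * (\<pi> j * h j * h j))
      + (\<Sum>i<n. \<Sum>j<n. (\<pi> j * f j * f j) * (\<pi> i * h i * h i))
      - 2 * (\<Sum>i<n. \<Sum>j<n. (\<pi> i * f i * h i) * (\<pi> j * f j * h j))"
    by (simp add: power2_diff sum_subtractf sum.distrib sum_distrib_left power2_eq_square algebra_simps)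
  also have "\<dots> = 2 * (inner_pi f f * inner_pi h h) - 2 * (inner_pi f h)^2"
  proof -
    have "(\<Sum>i<n. \<Sum>j<n. (\<pi> j * f j * f j) * (\<pi> i * h i * h i)) =
          (\<Sum>j<n. \<Sum>i<n. (\<pi> j * f j * f j) * (\<pi> i * h i * h i))" by (rule sum.swap)
    then show ?thesis unfolding inner_pi_def by (simp add: sum_product power2_eq_square)
  qed
  finally show ?thesis by simp
qed

definition norm_pi :: "(nat \<Rightarrow> real) \<Rightarrow> real" where
  "norm_pi f = sqrt (inner_pi f f)"

lemma norm_pi_nonneg: "0 \<le> norm_pi f"
  unfolding norm_pi_def by (rule real_sqrt_ge_zero[OF inner_pi_self_nonneg])

lemma norm_pi_square: "(norm_pi f)^2 = inner_pi f f"
  unfolding norm_pi_def by (rule real_sqrt_pow2[OF inner_pi_self_nonneg])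

lemma abs_inner_pi_le_norm_pi: "\<bar>inner_pi f h\<bar> \<le> norm_pi f * norm_pi h"
  using inner_pi_Cauchy_Schwarz[of f h] unfolding norm_pi_def
  by (metis real_sqrt_abs real_sqrt_le_mono real_sqrt_mult)

lemma inner_pi_le_norm_pi: "inner_pi f h \<le> norm_pi f * norm_pi h"
  using abs_inner_pi_le_norm_pi by (rule abs_le_D1)

lemma norm_pi_le_sup:
  assumes "\<And>i. i < n \<Longrightarrow> \<bar>f i\<bar> \<le> B"
  shows "norm_pi f \<le> B"
proof -
  have "\<pi> i * f i * f i \<le> \<pi> i * B^2" if "i < n" for i
  proof -
    have "\<bar>f i\<bar>^2 \<le> B^2" using assms[OF that] by (intro power_mono) auto
    then show ?thesis using pi_nonneg[OF that] by (simp add: mult.assoc power2_eq_square mult_left_mono)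
  qed
  then have "inner_pi f f \<le> (\<Sum>i<n. \<pi> i * B^2)"
    unfolding inner_pi_def by (intro sum_mono) auto
  also have "\<dots> = B^2" using pi_sum by (simp flip: sum_distrib_right)
  finally have "norm_pi f \<le> sqrt (B^2)" unfolding norm_pi_def by (rule real_sqrt_le_mono)
  moreover have "0 \<le> B" using assms[OF n_pos] by linarith
  ultimately show ?thesis by simp
qed

lemma Pop_iter_self_adjoint: "inner_pi f ((Pop ^^ k) h) = inner_pi ((Pop ^^ k) f) h"
proof (induction k arbitrary: f)
  case (Suc k f)
  have "inner_pi f ((Pop ^^ Suc k) h) = inner_pi (Pop f) ((Pop ^^ k) h)"
    by (simp add: Pop_self_adjoint)
  also have "\<dots> = inner_pi ((Pop ^^ Suc k) f) h" by (simp add: Suc.IH funpow_Suc_right del: funpow.simps)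
  finally show ?case .
qed simp

lemma Pop_iter_decay:
  assumes mean: "mean g = 0" and \<rho>: "\<rho> > slem n P"
  shows "\<exists>K. \<forall>k. norm_pi ((Pop ^^ k) g) \<le> K * \<rho> ^ k"
proof -
  obtain c where c: "\<forall>k i j. i < n \<longrightarrow> j < n \<longrightarrow> cmod ((Rmat ^\<^sub>m k) $$ (i,j)) \<le> c * \<rho> ^ k"
    using Rmat_pow_index_bound[OF \<rho>] by blast
  define G where "G = (\<Sum>j<n. \<bar>g j\<bar>)"
  have "\<bar>(Pop ^^ k) g i\<bar> \<le> c * G * \<rho> ^ k" if i: "i < n" for k i
  proof -
    have "\<bar>(Pop ^^ k) g i\<bar> \<le> (\<Sum>j<n. \<bar>Re ((Rmat ^\<^sub>m k) $$ (i,j)) * g j\<bar>)"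
      unfolding Pop_iter_Rmat[OF mean i] by (rule sum_abs)
    also have "\<dots> \<le> (\<Sum>j<n. c * \<rho> ^ k * \<bar>g j\<bar>)"
    proof (intro sum_mono)
      fix j assume "j \<in> {..<n}"
      then have "\<bar>Re ((Rmat ^\<^sub>m k) $$ (i,j))\<bar> \<le> c * \<rho> ^ k"
        using c i abs_Re_le_cmod order_trans by blast
      then show "\<bar>Re ((Rmat ^\<^sub>m k) $$ (i,j)) * g j\<bar> \<le> c * \<rho> ^ k * \<bar>g j\<bar>"
        by (simp add: abs_mult mult_right_mono)
    qed
    also have "\<dots> = c * G * \<rho> ^ k" unfolding G_def by (simp add: sum_distrib_left mult_ac)
    finally show ?thesis .
  qed
  then have "norm_pi ((Pop ^^ k) g) \<le> c * G * \<rho> ^ k" for k by (intro norm_pi_le_sup)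
  then show ?thesis by blast
qed

text \<open>Cauchy-Schwarz and self-adjointness, iterated. Against the decay of \<open>P^k g\<close> this turns the
  spectral-radius bound into an operator-norm bound.\<close>

lemma norm_Pop_power2_bound:
  "(norm_pi (Pop g))^(2^m) \<le> (norm_pi g)^(2^m - 1) * norm_pi ((Pop ^^ (2^m)) g)"
proof (induction m)
  case (Suc m)
  have step: "(norm_pi ((Pop ^^ k) g))^2 \<le> norm_pi g * norm_pi ((Pop ^^ (2*k)) g)" for k
    using inner_pi_le_norm_pi[of g "(Pop ^^ (2*k)) g"]
    by (simp add: norm_pi_square Pop_iter_self_adjoint[symmetric] mult_2 funpow_add)
  have "(norm_pi (Pop g))^(2^Suc m) = ((norm_pi (Pop g))^(2^m))^2"
    by (simp add: power_mult[symmetric] mult.commute)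
  also have "\<dots> \<le> ((norm_pi g)^(2^m - 1) * norm_pi ((Pop ^^ (2^m)) g))^2"
    using Suc.IH norm_pi_nonneg by (intro power_mono) auto
  also have "\<dots> \<le> (norm_pi g)^(2*(2^m - 1)) * (norm_pi g * norm_pi ((Pop ^^ (2*2^m)) g))"
    using step[of "2^m"] norm_pi_nonneg
    by (simp add: power_mult_distrib power_mult[symmetric] mult.commute mult_left_mono)
  also have "\<dots> = (norm_pi g)^(2^Suc m - 1) * norm_pi ((Pop ^^ (2^Suc m)) g)"
  proof -
    have "2*(2^m - 1) + 1 = (2^Suc m - 1::nat)"
      using one_le_power[of "2::nat" m] by (simp; arith)
    then have "(norm_pi g)^(2*(2^m - 1)) * norm_pi g = (norm_pi g)^(2^Suc m - 1)"
      by (metis power_add power_one_right)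
    then show ?thesis by (simp add: mult.assoc[symmetric])
  qed
  finally show ?case .
qed simp

lemma norm_Pop_le:
  assumes mean: "mean g = 0" and \<rho>: "\<rho> > slem n P"
  shows "norm_pi (Pop g) \<le> \<rho> * norm_pi g"
proof -
  have \<rho>_pos: "\<rho> > 0" using \<rho> slem_nonneg by linarith
  obtain K where K: "\<And>k. norm_pi ((Pop ^^ k) g) \<le> K * \<rho> ^ k" using Pop_iter_decay[OF mean \<rho>] by blast
  define a0 where "a0 = norm_pi g"
  define a1 where "a1 = norm_pi (Pop g)"
  have a0: "0 \<le> a0" and a1: "0 \<le> a1" unfolding a0_def a1_def by (auto simp: norm_pi_nonneg)
  have bound: "a1 ^ (2^m) \<le> a0 ^ (2^m - 1) * (K * \<rho> ^ (2^m))" for m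
  proof -
    have "a1 ^ (2^m) \<le> a0 ^ (2^m - 1) * norm_pi ((Pop ^^ (2^m)) g)"
      unfolding a0_def a1_def by (rule norm_Pop_power2_bound)
    also have "\<dots> \<le> a0 ^ (2^m - 1) * (K * \<rho> ^ (2^m))" using K a0 by (intro mult_left_mono) auto
    finally show ?thesis .
  qed
  show ?thesis
  proof (cases "a0 = 0")
    case True
    then have "a1^2 \<le> 0" using bound[of 1] by simp
    then show ?thesis using a1 True unfolding a0_def a1_def by simp
  next
    case False
    then have a0_pos: "a0 > 0" using a0 by simp
    have "(a1 / (\<rho> * a0)) ^ (2^m) \<le> K / a0" for m
    proof -
      have "a1 ^ (2^m) * a0 \<le> a0 ^ (2^m - 1) * a0 * (K * \<rho> ^ (2^m))"
        using bound[of m] a0_pos by (simp add: mult_right_mono mult_ac)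
      also have "a0 ^ (2^m - 1) * a0 = a0 ^ (2^m)"
        by (metis One_nat_def Suc_pred pos2 power_Suc2 zero_less_power)
      finally have "a1 ^ (2^m) / (\<rho> * a0) ^ (2^m) \<le> K / a0"
        using a0_pos \<rho>_pos by (simp add: field_simps power_mult_distrib)
      then show ?thesis by (simp add: power_divide)
    qed
    then have "a1 / (\<rho> * a0) \<le> 1" by (rule bounded_power2_powers_imp_le_1)
    then show ?thesis using a0_pos \<rho>_pos unfolding a0_def a1_def by (simp add: field_simps)
  qed
qed

lemma norm_Pop_le_slem:
  assumes "mean g = 0" shows "norm_pi (Pop g) \<le> slem n P * norm_pi g"
proof (cases "norm_pi g = 0")
  case True
  then show ?thesis using norm_Pop_le[OF assms, of "slem n P + 1"] norm_pi_nonneg[of "Pop g"] by simp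
next
  case False
  then have g_pos: "norm_pi g > 0" using norm_pi_nonneg[of g] by simp
  have "norm_pi (Pop g) / norm_pi g \<le> slem n P"
  proof (rule dense_ge)
    fix y assume "slem n P < y"
    then show "norm_pi (Pop g) / norm_pi g \<le> y"
      using norm_Pop_le[OF assms] g_pos by (simp add: divide_le_eq)
  qed
  then show ?thesis using g_pos by (simp add: divide_le_eq mult.commute)
qed

lemma norm_Pop_iter_le_slem:
  assumes "mean g = 0" shows "norm_pi ((Pop ^^ t) g) \<le> slem n P ^ t * norm_pi g"
proof (induction t)
  case (Suc t)
  have "norm_pi ((Pop ^^ Suc t) g) \<le> slem n P * norm_pi ((Pop ^^ t) g)"
    using norm_Pop_le_slem mean_Pop_iter assms by simp
  also have "\<dots> \<le> slem n P * (slem n P ^ t * norm_pi g)"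
    using Suc.IH slem_nonneg by (rule mult_left_mono)
  finally show ?case by simp
qed simp

lemma inner_pi_add_const:
  "inner_pi (\<lambda>i. a + g i) (\<lambda>i. b + h i) = a * b + a * mean h + b * mean g + inner_pi g h"
  unfolding inner_pi_def mean_def using pi_sum
  by (simp add: algebra_simps sum.distrib flip: sum_distrib_left sum_distrib_right)

lemma mean_decomposition:
  fixes f :: "nat \<Rightarrow> real"
  defines "g \<equiv> \<lambda>i. f i - mean f"
  shows "mean g = 0"
    and "inner_pi f f = (mean f)^2 + inner_pi g g"
    and "inner_pi f (Pop f) = (mean f)^2 + inner_pi g (Pop g)"
proof -
  have f: "f = (\<lambda>i. mean f + g i)" unfolding g_def by simp
  show g0: "mean g = 0"
    unfolding g_def mean_def using pi_sum by (simp add: right_diff_distrib sum_subtractf flip: sum_distrib_right mean_def)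
  show "inner_pi f f = (mean f)^2 + inner_pi g g"
    by (subst (1 2) f) (simp add: inner_pi_add_const g0 power2_eq_square)
  have "inner_pi f (Pop f) = inner_pi (\<lambda>i. mean f + g i) (\<lambda>i. mean f + Pop g i)"
    by (rule inner_pi_cong) (subst f, simp add: Pop_add_const)+
  then show "inner_pi f (Pop f) = (mean f)^2 + inner_pi g (Pop g)"
    by (simp add: inner_pi_add_const g0 mean_Pop power2_eq_square)
qed

lemma abs_inner_Pop_le_slem:
  assumes "mean g = 0" shows "\<bar>inner_pi g (Pop g)\<bar> \<le> slem n P * inner_pi g g"
proof -
  have "\<bar>inner_pi g (Pop g)\<bar> \<le> norm_pi g * (slem n P * norm_pi g)"
    using abs_inner_pi_le_norm_pi norm_Pop_le_slem[OF assms] norm_pi_nonneg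
    by (meson mult_left_mono order_trans)
  then show ?thesis by (simp add: norm_pi_square[symmetric] power2_eq_square mult_ac)
qed

end

section \<open>The chain killed on entering \<open>S\<close>\<close>

locale killed_chain = reversible_chain +
  fixes S :: "nat set"
  assumes S_subset: "S \<subseteq> {..<n}"
begin

abbreviation lam :: real where "lam \<equiv> slem n P"

definition mass_S :: real where "mass_S = (\<Sum>x\<in>S. \<pi> x)"

definition rho :: real where "rho = 1 - (1 - lam) * mass_S"

definition kill :: "(nat \<Rightarrow> real) \<Rightarrow> nat \<Rightarrow> real" where
  "kill g = (\<lambda>i. if i \<in> S then 0 else g i)"

definition Pkill :: "(nat \<Rightarrow> real) \<Rightarrow> nat \<Rightarrow> real" where
  "Pkill g = kill (Pop g)"

lemma finite_S: "finite S"
  using S_subset finite_subset by blast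

lemma mass_S_nonneg: "0 \<le> mass_S"
  unfolding mass_S_def using S_subset pi_nonneg by (intro sum_nonneg) auto

lemma mass_S_le_1: "mass_S \<le> 1"
proof -
  have "mass_S \<le> (\<Sum>x<n. \<pi> x)" unfolding mass_S_def using S_subset pi_nonneg by (intro sum_mono2) auto
  then show ?thesis using pi_sum by simp
qed

lemma lam_le_rho: "lam \<le> rho"
  using mass_S_le_1 slem_less_1 mult_right_mono[of mass_S 1 "1 - lam"]
  unfolding rho_def by (simp add: algebra_simps)

lemma rho_nonneg: "0 \<le> rho"
  using lam_le_rho slem_nonneg by linarith

lemma kill_vanishes: "i \<in> S \<Longrightarrow> kill g i = 0"
  unfolding kill_def by simp

lemma inner_pi_kill: "inner_pi u (kill g) = inner_pi (kill u) g"
  unfolding inner_pi_def kill_def by (intro sum.cong) auto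

lemma mean_square_le:
  assumes "\<And>i. i \<in> S \<Longrightarrow> f i = 0"
  shows "(mean f)^2 \<le> inner_pi f f * (1 - mass_S)"
proof -
  have "mean f = inner_pi f (kill (\<lambda>_. 1))"
    unfolding mean_def inner_pi_def kill_def using assms by (intro sum.cong) auto
  moreover have "inner_pi (kill (\<lambda>_. 1)) (kill (\<lambda>_. 1)) = (\<Sum>i\<in>{..<n} - S. \<pi> i)"
    unfolding inner_pi_def kill_def by (rule sum.mono_neutral_cong_right) auto
  moreover have "(\<Sum>i\<in>{..<n} - S. \<pi> i) = 1 - mass_S"
    using pi_sum S_subset unfolding mass_S_def by (simp add: sum_diff finite_S)
  ultimately show ?thesis using inner_pi_Cauchy_Schwarz by metis
qed

text \<open>Only the mean of \<open>f\<close> escapes the spectral gap, and for \<open>f\<close> vanishing on \<open>S\<close> the mean is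
  small: \<open>(mean f)^2 \<le> (1 - \<pi>(S)) \<parallel>f\<parallel>^2\<close>.\<close>

lemma abs_inner_Pop_le_rho:
  assumes vanish: "\<And>i. i \<in> S \<Longrightarrow> f i = 0"
  shows "\<bar>inner_pi f (Pop f)\<bar> \<le> rho * inner_pi f f"
proof -
  define g where "g = (\<lambda>i. f i - mean f)"
  note decomp = mean_decomposition[of f, folded g_def]
  have g: "\<bar>inner_pi g (Pop g)\<bar> \<le> lam * inner_pi g g" by (rule abs_inner_Pop_le_slem[OF decomp(1)])
  have c: "(mean f)^2 \<le> inner_pi f f * (1 - mass_S)" by (rule mean_square_le[OF vanish])
  have "inner_pi f (Pop f) \<le> lam * inner_pi f f + (1 - lam) * (mean f)^2"
    using g decomp(2,3) by (simp add: algebra_simps)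
  also have "\<dots> \<le> lam * inner_pi f f + (1 - lam) * (inner_pi f f * (1 - mass_S))"
    using c slem_less_1 by (intro add_left_mono mult_left_mono) auto
  also have "\<dots> = rho * inner_pi f f" unfolding rho_def by (simp add: algebra_simps)
  finally have upper: "inner_pi f (Pop f) \<le> rho * inner_pi f f" .
  have "lam * inner_pi g g \<le> lam * inner_pi f f"
    using decomp(2) slem_nonneg by (intro mult_left_mono) auto
  then have "- (lam * inner_pi f f) \<le> inner_pi f (Pop f)"
    using g decomp(3) zero_le_power2[of "mean f"] by linarith
  moreover have "lam * inner_pi f f \<le> rho * inner_pi f f"
    using lam_le_rho inner_pi_self_nonneg by (rule mult_right_mono)
  ultimately show ?thesis using upper by linarith
qed

text \<open>Polarization: apply the quadratic bound to \<open>f \<plusminus> t k\<close> with \<open>k = Pkill f\<close>.\<close>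

lemma Pkill_polarization:
  assumes vanish: "\<And>i. i \<in> S \<Longrightarrow> f i = 0"
  shows "4 * t * inner_pi (Pkill f) (Pkill f)
    \<le> rho * (2 * inner_pi f f + 2 * t^2 * inner_pi (Pkill f) (Pkill f))"
proof -
  define h where "h = (\<lambda>i. t * Pkill f i)"
  have h_vanish: "h i = 0" if "i \<in> S" for i
    unfolding h_def Pkill_def using that by (simp add: kill_vanishes)
  have "inner_pi h (Pop f) = inner_pi h (kill (Pop f))"
    unfolding inner_pi_def kill_def using h_vanish by (intro sum.cong) auto
  then have "inner_pi h (Pop f) = t * inner_pi (Pkill f) (Pkill f)"
    unfolding h_def Pkill_def inner_pi_scale_left by simp
  then have "4 * t * inner_pi (Pkill f) (Pkill f) = 4 * inner_pi h (Pop f)" by simp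
  also have "\<dots> = inner_pi (\<lambda>i. f i + h i) (Pop (\<lambda>i. f i + h i))
      - inner_pi (\<lambda>i. f i - h i) (Pop (\<lambda>i. f i - h i))"
    using Pop_self_adjoint[of f h] inner_pi_commute[of "Pop f" h]
    by (simp add: Pop_add Pop_diff inner_pi_add_left inner_pi_add_right
        inner_pi_diff_left inner_pi_diff_right)
  also have "\<dots> \<le> rho * inner_pi (\<lambda>i. f i + h i) (\<lambda>i. f i + h i)
      + rho * inner_pi (\<lambda>i. f i - h i) (\<lambda>i. f i - h i)"
    using abs_inner_Pop_le_rho[of "\<lambda>i. f i + h i"] abs_inner_Pop_le_rho[of "\<lambda>i. f i - h i"]
      vanish h_vanish by (simp add: abs_le_iff)
  also have "\<dots> = rho * (2 * inner_pi f f + 2 * t^2 * inner_pi (Pkill f) (Pkill f))"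
    unfolding h_def
    by (simp add: inner_pi_add_left inner_pi_add_right inner_pi_diff_left inner_pi_diff_right
        inner_pi_scale_left inner_pi_scale_right power2_eq_square algebra_simps)
  finally show ?thesis .
qed

lemma norm_Pkill_le:
  assumes vanish: "\<And>i. i \<in> S \<Longrightarrow> f i = 0"
  shows "norm_pi (Pkill f) \<le> rho * norm_pi f"
proof -
  have "inner_pi (Pkill f) (Pkill f) \<le> rho^2 * inner_pi f f"
  proof (cases "rho = 0")
    case True
    then show ?thesis
      using Pkill_polarization[OF vanish, where t = 1] inner_pi_self_nonneg[of "Pkill f"] by simp
  next
    case False
    then have "rho > 0" using rho_nonneg by simp
    with Pkill_polarization[OF vanish, where t = "1 / rho"] show ?thesis
      by (simp add: field_simps power2_eq_square)
  qed
  then have "sqrt (inner_pi (Pkill f) (Pkill f)) \<le> sqrt (rho^2 * inner_pi f f)"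
    by (rule real_sqrt_le_mono)
  then show ?thesis unfolding norm_pi_def using rho_nonneg by (simp add: real_sqrt_mult)
qed

definition Pkill_adj :: "(nat \<Rightarrow> real) \<Rightarrow> nat \<Rightarrow> real" where
  "Pkill_adj g = Pop (kill g)"

definition survival :: "nat \<Rightarrow> real" where
  "survival m = inner_pi (\<lambda>_. 1) ((Pkill ^^ m) (\<lambda>_. 1))"

lemma Pkill_iter_vanishes: "i \<in> S \<Longrightarrow> (Pkill ^^ Suc m) f i = 0"
  by (simp add: Pkill_def kill_vanishes)

lemma Pkill_iter_cong:
  "(\<And>j. j < n \<Longrightarrow> f j = g j) \<Longrightarrow> i < n \<Longrightarrow> (Pkill ^^ m) f i = (Pkill ^^ m) g i"
proof (induction m arbitrary: i)
  case (Suc m i)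
  then have "Pkill ((Pkill ^^ m) f) = Pkill ((Pkill ^^ m) g)"
    unfolding Pkill_def by (metis Pop_cong)
  then show ?case by simp
qed simp

lemma Pkill_linear: "Pkill (\<lambda>i. c * f i + g i) = (\<lambda>i. c * Pkill f i + Pkill g i)"
  unfolding Pkill_def kill_def Pop_def by (auto simp: sum.distrib sum_distrib_left algebra_simps)

lemma Pkill_iter_linear:
  "(Pkill ^^ m) (\<lambda>i. c * f i + g i) = (\<lambda>i. c * (Pkill ^^ m) f i + (Pkill ^^ m) g i)"
  by (induction m) (simp_all add: Pkill_linear)

lemma Pkill_iter_mono:
  "(\<And>j. j < n \<Longrightarrow> f j \<le> g j) \<Longrightarrow> i < n \<Longrightarrow> (Pkill ^^ m) f i \<le> (Pkill ^^ m) g i"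
  by (induction m arbitrary: i) (auto simp: Pkill_def kill_def intro: Pop_mono)

lemma Pkill_iter_nonneg:
  "(\<And>j. j < n \<Longrightarrow> 0 \<le> f j) \<Longrightarrow> i < n \<Longrightarrow> 0 \<le> (Pkill ^^ m) f i"
  by (induction m arbitrary: i) (auto simp: Pkill_def kill_def intro: Pop_nonneg)

lemma Pkill_iter_le_Pop_iter:
  "(\<And>j. j < n \<Longrightarrow> 0 \<le> f j) \<Longrightarrow> i < n \<Longrightarrow> (Pkill ^^ m) f i \<le> (Pop ^^ m) f i"
proof (induction m arbitrary: i)
  case (Suc m i)
  have "(Pkill ^^ Suc m) f i \<le> Pop ((Pkill ^^ m) f) i"
    using Suc.prems Pop_nonneg[OF Pkill_iter_nonneg] by (simp add: Pkill_def kill_def)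
  also have "\<dots> \<le> (Pop ^^ Suc m) f i" using Suc by (simp add: Pop_mono)
  finally show ?case .
qed simp

lemma inner_pi_Pkill_iter: "inner_pi u ((Pkill ^^ m) g) = inner_pi ((Pkill_adj ^^ m) u) g"
proof (induction m arbitrary: u)
  case (Suc m u)
  have "inner_pi u ((Pkill ^^ Suc m) g) = inner_pi (Pkill_adj u) ((Pkill ^^ m) g)"
    by (simp add: Pkill_def Pkill_adj_def inner_pi_kill Pop_self_adjoint)
  also have "\<dots> = inner_pi ((Pkill_adj ^^ Suc m) u) g"
    by (simp add: Suc.IH funpow_Suc_right del: funpow.simps)
  finally show ?case .
qed simp

lemma Pkill_adj_iter_range:
  "i < n \<Longrightarrow> 0 \<le> (Pkill_adj ^^ m) (\<lambda>_. 1) i \<and> (Pkill_adj ^^ m) (\<lambda>_. 1) i \<le> 1"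
proof (induction m arbitrary: i)
  case (Suc m i)
  define u where "u = kill ((Pkill_adj ^^ m) (\<lambda>_. 1))"
  have "0 \<le> u j" "u j \<le> 1" if "j < n" for j
    using Suc.IH[OF that] by (auto simp: u_def kill_def)
  then have "0 \<le> Pop u i" "Pop u i \<le> Pop (\<lambda>_. 1) i"
    using Suc.prems by (auto intro: Pop_nonneg Pop_mono)
  moreover have "(Pkill_adj ^^ Suc m) (\<lambda>_. 1) i = Pop u i"
    by (simp only: funpow.simps o_apply Pkill_adj_def u_def)
  ultimately show ?case using Suc.prems by (simp add: Pop_const)
qed simp

lemma norm_Pkill_iter_one: "norm_pi ((Pkill ^^ Suc m) (\<lambda>_. 1)) \<le> rho ^ m"
proof (induction m)
  case 0
  have "inner_pi (Pkill (\<lambda>_. 1)) (Pkill (\<lambda>_. 1)) \<le> inner_pi (\<lambda>_. 1) (\<lambda>_. 1)"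
    unfolding inner_pi_def Pkill_def kill_def using pi_nonneg
    by (intro sum_mono) (auto simp: Pop_const)
  also have "\<dots> = 1" unfolding inner_pi_def using pi_sum by simp
  finally show ?case unfolding norm_pi_def by simp
next
  case (Suc m)
  have "norm_pi ((Pkill ^^ Suc (Suc m)) (\<lambda>_. 1)) \<le> rho * norm_pi ((Pkill ^^ Suc m) (\<lambda>_. 1))"
    using norm_Pkill_le[OF Pkill_iter_vanishes] by simp
  also have "\<dots> \<le> rho * rho ^ m" using Suc.IH rho_nonneg by (rule mult_left_mono)
  finally show ?case by simp
qed

lemma survival_nonneg: "0 \<le> survival m"
  unfolding survival_def inner_pi_def using pi_nonneg Pkill_iter_nonneg[of "\<lambda>_. 1"]
  by (auto intro!: sum_nonneg)

lemma survival_le: "survival m \<le> rho ^ (m - 1)"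
proof (cases m)
  case 0 then show ?thesis unfolding survival_def inner_pi_def using pi_sum by simp
next
  case (Suc j)
  have "survival m = inner_pi (Pkill (\<lambda>_. 1)) ((Pkill ^^ Suc j) (\<lambda>_. 1))"
    unfolding survival_def Suc inner_pi_def
    by (intro sum.cong refl) (auto simp: Pkill_iter_vanishes Pop_const Pkill_def kill_def simp del: funpow.simps)
  also have "\<dots> \<le> norm_pi (Pkill (\<lambda>_. 1)) * norm_pi ((Pkill ^^ Suc j) (\<lambda>_. 1))"
    by (rule inner_pi_le_norm_pi)
  also have "\<dots> \<le> 1 * rho ^ j"
    using norm_Pkill_iter_one[of 0] norm_Pkill_iter_one[of j] norm_pi_nonneg by (intro mult_mono) auto
  finally show ?thesis using Suc by simp
qed

lemma norm_Pkill_adj_iter_one: "norm_pi ((Pkill_adj ^^ m) (\<lambda>_. 1)) \<le> sqrt (survival m)"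
proof -
  define w where "w = (Pkill_adj ^^ m) (\<lambda>_. 1)"
  have "\<pi> i * w i * w i \<le> \<pi> i * w i * 1" if "i < n" for i
    using Pkill_adj_iter_range[OF that, of m] pi_nonneg[OF that] unfolding w_def
    by (simp add: mult.assoc mult_left_mono mult_left_le)
  then have "inner_pi w w \<le> inner_pi w (\<lambda>_. 1)" unfolding inner_pi_def by (intro sum_mono) auto
  also have "\<dots> = survival m"
    unfolding survival_def w_def using inner_pi_Pkill_iter inner_pi_commute by metis
  finally show ?thesis unfolding norm_pi_def w_def by (rule real_sqrt_le_mono)
qed

lemma hit_at_nonneg: "y < n \<Longrightarrow> 0 \<le> hit_at n P S k y x"
  by (induction k arbitrary: y) (auto intro!: sum_nonneg mult_nonneg_nonneg P_nonneg)

lemma sum_hit_at_le_1: "y < n \<Longrightarrow> (\<Sum>k<K. hit_at n P S k y x) \<le> 1"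
proof (induction K arbitrary: y)
  case (Suc K y)
  have "(\<Sum>k<Suc K. hit_at n P S k y x) = hit_at n P S 0 y x + (\<Sum>k<K. hit_at n P S (Suc k) y x)"
    by (rule sum.lessThan_Suc_shift)
  also have "\<dots> \<le> 1"
  proof (cases "y \<in> S")
    case False
    have "(\<Sum>k<K. hit_at n P S (Suc k) y x) = (\<Sum>z<n. P y z * (\<Sum>k<K. hit_at n P S k z x))"
      using False by (simp add: sum_distrib_left) (rule sum.swap)
    also have "\<dots> \<le> (\<Sum>z<n. P y z * 1)"
      using Suc.IH P_nonneg Suc.prems by (intro sum_mono mult_left_mono) auto
    also have "\<dots> = 1" using P_row_sum[OF Suc.prems] by simp
    finally show ?thesis using False by simp
  qed simp
  finally show ?case .
qed simp

lemma summable_hit_at: "y < n \<Longrightarrow> summable (\<lambda>k. hit_at n P S k y x)"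
  by (rule summableI_nonneg_bounded[where x=1]) (auto intro: hit_at_nonneg sum_hit_at_le_1)

end

section \<open>Harmonic measure from stationarity\<close>

lemma sum_power_pred_le:
  fixes x :: real
  assumes "0 \<le> x" "x < 1"
  shows "(\<Sum>m<M. x ^ (m - 1)) \<le> 1 + 1 / (1 - x)"
proof (cases M)
  case (Suc M')
  have "(\<Sum>m<M. x ^ (m - 1)) = 1 + (\<Sum>m<M'. x ^ m)" unfolding Suc by (subst sum.lessThan_Suc_shift) simp
  also have "(\<Sum>m<M'. x ^ m) = (1 - x ^ M') / (1 - x)" using assms by (simp add: sum_gp_strict)
  also have "\<dots> \<le> 1 / (1 - x)" using assms by (intro divide_right_mono) auto
  finally show ?thesis by simp
qed (use assms in simp)

lemma inverse_one_minus_sqrt_le: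
  fixes x :: real
  assumes "0 \<le> x" "x < 1"
  shows "1 / (1 - sqrt x) \<le> 2 / (1 - x)"
proof -
  have "1 - x = (1 - sqrt x) * (1 + sqrt x)" using assms by (simp add: algebra_simps)
  also have "\<dots> \<le> (1 - sqrt x) * 2" using assms by (intro mult_left_mono) auto
  finally show ?thesis using assms by (simp add: field_simps)
qed

text \<open>The number of free steps \<open>t \<approx> log(\<surd>a / b) / \<gamma>\<close> balancing the two error terms.\<close>

lemma horizon_choice:
  fixes a b \<gamma> :: real
  assumes \<gamma>: "0 < \<gamma>" "\<gamma> \<le> 1" and a: "0 < a" "a \<le> b" and b: "b < 1"
  obtains t :: nat where "(1 - \<gamma>) ^ t * sqrt a \<le> b" "real t * a \<le> b * ln (1 / b) / (2 * \<gamma>) + a"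
proof -
  have b0: "0 < b" using a by simp
  define L where "L = max 0 (ln (sqrt a / b))"
  define t where "t = nat \<lceil>L / \<gamma>\<rceil>"
  have L0: "0 \<le> L" unfolding L_def by simp
  have t_ge: "L / \<gamma> \<le> real t" unfolding t_def using L0 \<gamma> by (simp add: of_nat_nat le_of_int_ceiling)
  have t_le: "real t \<le> L / \<gamma> + 1"
    unfolding t_def using L0 \<gamma> ceiling_correct[of "L / \<gamma>"] by (simp add: of_nat_nat)
  have "(1 - \<gamma>) ^ t \<le> exp (- \<gamma>) ^ t"
    using exp_ge_add_one_self[of "- \<gamma>"] \<gamma> by (intro power_mono) auto
  also have "\<dots> = exp (- (\<gamma> * real t))" by (simp add: exp_of_nat_mult[symmetric] mult_ac)
  also have "\<dots> \<le> exp (- ln (sqrt a / b))"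
    using t_ge \<gamma> unfolding L_def by (simp add: field_simps)
  also have "\<dots> = b / sqrt a" using a b0 by (simp add: exp_minus)
  finally have "(1 - \<gamma>) ^ t * sqrt a \<le> b" using a by (simp add: field_simps)
  moreover have "real t * a \<le> b * ln (1 / b) / (2 * \<gamma>) + a"
  proof -
    have "ln (sqrt a / b) \<le> ln (sqrt b / b)" using a b0 by (simp add: divide_right_mono)
    also have "\<dots> = ln (1 / b) / 2" using b0 by (simp add: ln_div ln_sqrt)
    finally have "L \<le> ln (1 / b) / 2" unfolding L_def using b b0 by (simp add: max_def)
    then have "L * a \<le> (ln (1 / b) / 2) * b" using a L0 b by (intro mult_mono) auto
    then have "L * a / \<gamma> \<le> b * ln (1 / b) / (2 * \<gamma>)"
      using \<gamma> by (simp add: field_simps)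
    moreover have "real t * a \<le> L * a / \<gamma> + a"
      using mult_right_mono[OF t_le, of a] a \<gamma> by (simp add: field_simps)
    ultimately show ?thesis by linarith
  qed
  ultimately show thesis by (rule that)
qed

lemma mult_ln_inverse_le_1:
  fixes s :: real
  assumes "0 < s" shows "s * ln (1 / s) \<le> 1"
proof -
  have "s * ln (1 / s) \<le> s * (1 / s - 1)"
    using assms by (intro mult_left_mono ln_le_minus_one) auto
  also have "\<dots> = 1 - s" using assms by (simp add: field_simps)
  finally show ?thesis using assms by simp
qed

lemma product_entropy_le:
  fixes \<epsilon> s :: real
  assumes "0 < \<epsilon>" "\<epsilon> \<le> 1" "0 < s" "s \<le> 1"
  shows "\<epsilon> * s * ln (1 / (\<epsilon> * s)) \<le> \<epsilon> * ln (1 / \<epsilon>) + \<epsilon>"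
proof -
  have "ln (1 / (\<epsilon> * s)) = ln (1 / \<epsilon>) + ln (1 / s)"
    using assms ln_mult[of "1 / \<epsilon>" "1 / s"] by simp
  then have "\<epsilon> * s * ln (1 / (\<epsilon> * s)) = s * (\<epsilon> * ln (1 / \<epsilon>)) + \<epsilon> * (s * ln (1 / s))"
    by (simp add: algebra_simps)
  also have "\<dots> \<le> \<epsilon> * ln (1 / \<epsilon>) + \<epsilon>"
  proof (rule add_mono)
    show "s * (\<epsilon> * ln (1 / \<epsilon>)) \<le> \<epsilon> * ln (1 / \<epsilon>)"
      using assms by (intro mult_left_le_one_le) auto
    show "\<epsilon> * (s * ln (1 / s)) \<le> \<epsilon>"
      using mult_ln_inverse_le_1[of s] assms by (simp add: mult_left_le)
  qed
  finally show ?thesis .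
qed

lemma optimized_error_bound:
  fixes \<epsilon> a s \<gamma> :: real
  assumes \<epsilon>: "0 < \<epsilon>" "\<epsilon> < exp (-1)" and a: "0 < a" "a \<le> \<epsilon> * s"
    and s: "0 < s" "s \<le> 1" and \<gamma>: "0 < \<gamma>" "\<gamma> \<le> 1"
  shows "\<exists>t::nat. t * a + a * (1 + 1 / (\<gamma> * s)) + (1 - \<gamma>) ^ t * sqrt a * (1 + 2 / (\<gamma> * s))
    \<le> 7 * (\<epsilon> * ln (1 / \<epsilon>)) / \<gamma>"
proof -
  define E where "E = \<epsilon> * ln (1 / \<epsilon>)"
  have "exp 1 < 1 / \<epsilon>" using \<epsilon> by (simp add: exp_minus field_simps)
  then have "ln (exp 1) < ln (1 / \<epsilon>)" using \<epsilon> by (subst ln_less_cancel_iff) auto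
  then have "1 < ln (1 / \<epsilon>)" by simp
  then have \<epsilon>_E: "\<epsilon> \<le> E" unfolding E_def using \<epsilon> by simp
  have \<epsilon>_1: "\<epsilon> < 1" using \<epsilon> exp_less_one_iff[of "-1"] by linarith
  have \<epsilon>s: "\<epsilon> * s \<le> \<epsilon>" using s \<epsilon> by (simp add: mult_left_le)
  have \<epsilon>_div: "\<epsilon> \<le> \<epsilon> / \<gamma>" using \<gamma> \<epsilon> by (simp add: le_divide_eq mult_left_le)
  have "\<epsilon> * s < 1" using \<epsilon>s \<epsilon>_1 by linarith
  then obtain t :: nat where decay: "(1 - \<gamma>) ^ t * sqrt a \<le> \<epsilon> * s"
    and linear: "real t * a \<le> \<epsilon> * s * ln (1 / (\<epsilon> * s)) / (2 * \<gamma>) + a"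
    using horizon_choice[OF \<gamma> a] by blast
  have "\<epsilon> * s * ln (1 / (\<epsilon> * s)) \<le> E + \<epsilon>"
    unfolding E_def using \<epsilon> \<epsilon>_1 s by (intro product_entropy_le) auto
  then have "\<epsilon> * s * ln (1 / (\<epsilon> * s)) / (2 * \<gamma>) \<le> (E + \<epsilon>) / (2 * \<gamma>)"
    using \<gamma> by (simp add: divide_right_mono)
  then have "real t * a \<le> (E + \<epsilon>) / (2 * \<gamma>) + a" using linear by linarith
  moreover have "(1 - \<gamma>) ^ t * sqrt a * (1 + 2 / (\<gamma> * s)) \<le> \<epsilon> * s * (1 + 2 / (\<gamma> * s))"
    using decay \<gamma> s by (intro mult_right_mono) auto
  moreover have "\<epsilon> * s * (1 + 2 / (\<gamma> * s)) = \<epsilon> * s + 2 * (\<epsilon> / \<gamma>)"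
    using \<gamma> s by (simp add: field_simps)
  moreover have "a * (1 + 1 / (\<gamma> * s)) = a + a / (\<gamma> * s)"
    by (simp add: distrib_left)
  moreover have "a / (\<gamma> * s) \<le> \<epsilon> / \<gamma>"
    using a \<gamma> s by (simp add: divide_le_eq field_simps)
  ultimately have "t * a + a * (1 + 1 / (\<gamma> * s)) + (1 - \<gamma>) ^ t * sqrt a * (1 + 2 / (\<gamma> * s))
      \<le> (E + \<epsilon>) / (2 * \<gamma>) + 6 * (\<epsilon> / \<gamma>)"
    using a \<epsilon>s \<epsilon>_div by linarith
  also have "\<dots> = (E + 13 * \<epsilon>) / (2 * \<gamma>)" using \<gamma> by (simp add: field_simps)
  also have "\<dots> \<le> (14 * E) / (2 * \<gamma>)" using \<epsilon>_E \<gamma> by (intro divide_right_mono) auto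
  also have "\<dots> = 7 * E / \<gamma>" by simp
  finally show ?thesis unfolding E_def by blast
qed

locale killed_chain_target = killed_chain +
  fixes A :: "nat set"
  assumes A_subset: "A \<subseteq> S"
begin

definition mass_A :: real where "mass_A = (\<Sum>x\<in>A. \<pi> x)"

definition ind_A :: "nat \<Rightarrow> real" where "ind_A = (\<lambda>i. if i \<in> A then 1 else 0)"

text \<open>\<open>hit_mass k = Pr_\<pi>[T_S = k, X_k \<in> A]\<close> (lemma \<open>hit_mass_eq\<close>).\<close>

definition hit_mass :: "nat \<Rightarrow> real" where
  "hit_mass k = inner_pi (\<lambda>_. 1) ((Pkill ^^ k) ind_A)"

lemma finite_A: "finite A"
  using A_subset finite_S finite_subset by blast

lemma mass_A_nonneg: "0 \<le> mass_A"
  unfolding mass_A_def using A_subset S_subset pi_nonneg by (intro sum_nonneg) auto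

lemma mass_A_le_mass_S: "mass_A \<le> mass_S"
  unfolding mass_A_def mass_S_def using A_subset S_subset finite_S pi_nonneg by (intro sum_mono2) auto

lemma mean_ind_A: "mean ind_A = mass_A"
  and inner_pi_ind_A: "inner_pi ind_A ind_A = mass_A"
  unfolding mean_def inner_pi_def ind_A_def mass_A_def using A_subset S_subset
  by (simp_all add: if_distrib sum.If_cases Int_absorb1 cong: if_cong)

lemma hit_mass_nonneg: "0 \<le> hit_mass k"
  unfolding hit_mass_def inner_pi_def using pi_nonneg Pkill_iter_nonneg[of ind_A]
  by (auto intro!: sum_nonneg simp: ind_A_def)

lemma hit_mass_le_mass_A: "hit_mass k \<le> mass_A"
proof -
  have "hit_mass k \<le> inner_pi (\<lambda>_. 1) ((Pop ^^ k) ind_A)"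
    unfolding hit_mass_def inner_pi_def using pi_nonneg Pkill_iter_le_Pop_iter[of ind_A]
    by (intro sum_mono) (auto simp: ind_A_def intro!: mult_left_mono)
  also have "\<dots> = mass_A" using mean_Pop_iter[of k ind_A] mean_ind_A by (simp add: mean_def inner_pi_def)
  finally show ?thesis .
qed

text \<open>After \<open>t\<close> free steps \<open>P^t 1_A\<close> is within \<open>\<lambda>^t \<surd>\<pi>(A)\<close> of the constant \<open>\<pi>(A)\<close>; the
  remaining \<open>m\<close> killed steps contribute the survival probability.\<close>

lemma hit_mass_shift:
  "hit_mass (t + m) \<le> mass_A * survival m + sqrt (survival m) * (lam ^ t * sqrt mass_A)"
proof -
  define e where "e = (\<lambda>i. ind_A i - mass_A)"
  define E where "E = (Pop ^^ t) e"
  have e_mean: "mean e = 0"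
    unfolding e_def mean_def using mean_ind_A pi_sum
    by (simp add: right_diff_distrib sum_subtractf mean_def flip: sum_distrib_right)
  have "inner_pi e e = mass_A - mass_A^2"
    using mean_decomposition(2)[of ind_A] inner_pi_ind_A mean_ind_A unfolding e_def by simp
  then have "norm_pi e \<le> sqrt mass_A" unfolding norm_pi_def by simp
  then have E: "norm_pi E \<le> lam ^ t * sqrt mass_A"
    unfolding E_def using norm_Pop_iter_le_slem[OF e_mean] slem_nonneg
    by (meson mult_left_mono order_trans zero_le_power)
  have Pop_ind_A: "(Pop ^^ t) ind_A j = mass_A * 1 + E j" if "j < n" for j
    using Pop_iter_add_const[OF that, of t mass_A e] unfolding E_def e_def by simp
  have "hit_mass (t + m) = inner_pi (\<lambda>_. 1) ((Pkill ^^ m) ((Pkill ^^ t) ind_A))"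
    unfolding hit_mass_def by (simp add: funpow_add add.commute[of t m])
  also have "\<dots> \<le> inner_pi (\<lambda>_. 1) ((Pkill ^^ m) ((Pop ^^ t) ind_A))"
    unfolding inner_pi_def using pi_nonneg
    by (intro sum_mono mult_left_mono Pkill_iter_mono Pkill_iter_le_Pop_iter) (auto simp: ind_A_def)
  also have "\<dots> = inner_pi (\<lambda>_. 1) ((Pkill ^^ m) (\<lambda>i. mass_A * 1 + E i))"
    by (intro inner_pi_cong refl Pkill_iter_cong Pop_ind_A)
  also have "\<dots> = mass_A * survival m + inner_pi ((Pkill_adj ^^ m) (\<lambda>_. 1)) E"
    unfolding Pkill_iter_linear inner_pi_add_right inner_pi_scale_right survival_def inner_pi_Pkill_iter ..
  also have "\<dots> \<le> mass_A * survival m + norm_pi ((Pkill_adj ^^ m) (\<lambda>_. 1)) * norm_pi E"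
    using inner_pi_le_norm_pi by simp
  also have "\<dots> \<le> mass_A * survival m + sqrt (survival m) * (lam ^ t * sqrt mass_A)"
    using norm_Pkill_adj_iter_one E norm_pi_nonneg survival_nonneg by (intro add_left_mono mult_mono) auto
  finally show ?thesis .
qed

lemma sum_hit_at_eq_Pkill_iter: "(\<lambda>y. \<Sum>x\<in>A. hit_at n P S k y x) = (Pkill ^^ k) ind_A"
proof (induction k)
  case 0
  have "(\<Sum>x\<in>A. hit_at n P S 0 y x) = ind_A y" for y
  proof (cases "y \<in> A")
    case True
    then have "(\<Sum>x\<in>A. hit_at n P S 0 y x) = (\<Sum>x\<in>A. if x = y then 1 else 0)"
      using A_subset by (intro sum.cong) auto
    then show ?thesis using True finite_A by (simp add: ind_A_def)
  qed (auto simp: ind_A_def intro!: sum.neutral)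
  then show ?case by auto
next
  case (Suc k)
  show ?case
  proof
    fix y
    have "(\<Sum>x\<in>A. hit_at n P S (Suc k) y x) =
        (if y \<in> S then 0 else (\<Sum>z<n. P y z * (\<Sum>x\<in>A. hit_at n P S k z x)))"
      by (simp add: sum_distrib_left) (subst sum.swap, simp)
    also have "\<dots> = (if y \<in> S then 0 else (\<Sum>z<n. P y z * (Pkill ^^ k) ind_A z))"
      using fun_cong[OF Suc.IH] by simp
    also have "\<dots> = Pkill ((Pkill ^^ k) ind_A) y" by (simp add: Pkill_def kill_def Pop_def)
    finally show "(\<Sum>x\<in>A. hit_at n P S (Suc k) y x) = (Pkill ^^ Suc k) ind_A y" by simp
  qed
qed

lemma hit_mass_eq: "hit_mass k = (\<Sum>x\<in>A. \<Sum>y<n. \<pi> y * hit_at n P S k y x)"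
proof -
  have "hit_mass k = (\<Sum>y<n. \<pi> y * (\<Sum>x\<in>A. hit_at n P S k y x))"
    unfolding hit_mass_def inner_pi_def using fun_cong[OF sum_hit_at_eq_Pkill_iter[of k]] by simp
  also have "\<dots> = (\<Sum>x\<in>A. \<Sum>y<n. \<pi> y * hit_at n P S k y x)"
    by (simp add: sum_distrib_left) (rule sum.swap)
  finally show ?thesis .
qed

lemma harm_sum_eq_suminf_hit_mass:
  shows "(\<Sum>x\<in>A. harm n P \<pi> S x) = (\<Sum>k. hit_mass k)" and "summable hit_mass"
proof -
  have summable: "summable (\<lambda>k. \<pi> y * hit_at n P S k y x)" if "y < n" for y x
    using summable_hit_at[OF that] by (rule summable_mult)
  have "(\<Sum>x\<in>A. harm n P \<pi> S x) = (\<Sum>x\<in>A. \<Sum>y<n. \<Sum>k. \<pi> y * hit_at n P S k y x)"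
    unfolding harm_def harm_from_def using summable_hit_at
    by (intro sum.cong refl) (simp add: suminf_mult)
  also have "\<dots> = (\<Sum>x\<in>A. \<Sum>k. \<Sum>y<n. \<pi> y * hit_at n P S k y x)"
    using summable by (intro sum.cong refl suminf_sum[symmetric]) auto
  also have "\<dots> = (\<Sum>k. \<Sum>x\<in>A. \<Sum>y<n. \<pi> y * hit_at n P S k y x)"
    using summable by (intro suminf_sum[symmetric] summable_sum) auto
  finally show "(\<Sum>x\<in>A. harm n P \<pi> S x) = (\<Sum>k. hit_mass k)" unfolding hit_mass_eq .
  show "summable hit_mass" unfolding hit_mass_eq using summable by (intro summable_sum) auto
qed

lemma sum_hit_mass_le:
  assumes S_pos: "mass_S > 0"
  shows "(\<Sum>k<K. hit_mass k) \<le> t * mass_A + mass_A * (1 + 1 / ((1 - lam) * mass_S))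
    + lam ^ t * sqrt mass_A * (1 + 2 / ((1 - lam) * mass_S))"
proof -
  have gap_rho: "1 - rho = (1 - lam) * mass_S" unfolding rho_def by simp
  have "0 < (1 - lam) * mass_S" using S_pos slem_less_1 by simp
  then have rho_lt_1: "rho < 1" using gap_rho by linarith
  have c0: "0 \<le> lam ^ t * sqrt mass_A" using slem_nonneg mass_A_nonneg by simp
  have "(\<Sum>k<K. hit_mass k) \<le> (\<Sum>k<t + K. hit_mass k)"
    using hit_mass_nonneg by (intro sum_mono2) auto
  also have "\<dots> = (\<Sum>k<t. hit_mass k) + (\<Sum>m<K. hit_mass (t + m))"
    by (induction K) (simp_all add: add.assoc)
  also have "(\<Sum>k<t. hit_mass k) \<le> t * mass_A"
    using sum_bounded_above[of "{..<t}" hit_mass mass_A] hit_mass_le_mass_A by simp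
  also have "(\<Sum>m<K. hit_mass (t + m))
      \<le> (\<Sum>m<K. mass_A * rho ^ (m - 1) + sqrt rho ^ (m - 1) * (lam ^ t * sqrt mass_A))"
  proof (intro sum_mono)
    fix m
    have "hit_mass (t + m) \<le> mass_A * survival m + sqrt (survival m) * (lam ^ t * sqrt mass_A)"
      by (rule hit_mass_shift)
    also have "\<dots> \<le> mass_A * rho ^ (m - 1) + sqrt (rho ^ (m - 1)) * (lam ^ t * sqrt mass_A)"
      using survival_le[of m] mass_A_nonneg c0
      by (intro add_mono mult_left_mono mult_right_mono real_sqrt_le_mono) auto
    finally show "hit_mass (t + m) \<le> mass_A * rho ^ (m - 1) + sqrt rho ^ (m - 1) * (lam ^ t * sqrt mass_A)"
      by (simp add: real_sqrt_power)
  qed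
  also have "\<dots> = mass_A * (\<Sum>m<K. rho ^ (m - 1)) + (lam ^ t * sqrt mass_A) * (\<Sum>m<K. sqrt rho ^ (m - 1))"
    by (simp add: sum.distrib sum_distrib_left mult_ac)
  also have "\<dots> \<le> mass_A * (1 + 1 / (1 - rho)) + (lam ^ t * sqrt mass_A) * (1 + 2 / (1 - rho))"
  proof -
    have "(\<Sum>m<K. sqrt rho ^ (m - 1)) \<le> 1 + 1 / (1 - sqrt rho)"
      using rho_nonneg rho_lt_1 by (intro sum_power_pred_le) auto
    then have "(\<Sum>m<K. sqrt rho ^ (m - 1)) \<le> 1 + 2 / (1 - rho)"
      using inverse_one_minus_sqrt_le[OF rho_nonneg rho_lt_1] by linarith
    then show ?thesis using sum_power_pred_le[OF rho_nonneg rho_lt_1] mass_A_nonneg c0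
      by (intro add_mono mult_left_mono) auto
  qed
  finally show ?thesis unfolding gap_rho by (simp add: mult_ac)
qed

lemma harm_sum_le:
  assumes \<epsilon>: "0 < \<epsilon>" "\<epsilon> < exp (-1)" and small: "mass_A \<le> \<epsilon> * mass_S"
  shows "(\<Sum>x\<in>A. harm n P \<pi> S x) \<le> 7 * (\<epsilon> * ln (1 / \<epsilon>)) / (1 - lam)"
proof (cases "A = {}")
  case True
  have "\<epsilon> < 1" using \<epsilon> exp_less_one_iff[of "-1"] by linarith
  then have "0 \<le> ln (1 / \<epsilon>)" using \<epsilon> by simp
  then show ?thesis using True \<epsilon> slem_less_1 by simp
next
  case False
  then obtain x where x: "x \<in> A" by auto
  have "\<pi> x \<le> mass_A"
    unfolding mass_A_def using x finite_A A_subset S_subset pi_nonneg by (intro member_le_sum) auto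
  then have A_pos: "0 < mass_A" using pi_pos x A_subset S_subset by force
  then have S_pos: "0 < mass_S" using mass_A_le_mass_S by simp
  have gap: "0 < 1 - lam" "1 - lam \<le> 1" using slem_less_1 slem_nonneg by auto
  obtain t :: nat where t: "t * mass_A + mass_A * (1 + 1 / ((1 - lam) * mass_S))
      + (1 - (1 - lam)) ^ t * sqrt mass_A * (1 + 2 / ((1 - lam) * mass_S))
      \<le> 7 * (\<epsilon> * ln (1 / \<epsilon>)) / (1 - lam)"
    using optimized_error_bound[OF \<epsilon> A_pos small S_pos mass_S_le_1 gap] by blast
  have "(\<Sum>k. hit_mass k) \<le> t * mass_A + mass_A * (1 + 1 / ((1 - lam) * mass_S))
      + lam ^ t * sqrt mass_A * (1 + 2 / ((1 - lam) * mass_S))"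
    using harm_sum_eq_suminf_hit_mass(2) sum_hit_mass_le[OF S_pos] by (rule suminf_le_const)
  with t show ?thesis unfolding harm_sum_eq_suminf_hit_mass(1) by simp
qed

end

theorem mainTheorem7:
  "\<exists>C>0. \<exists>\<epsilon>0>0. \<forall>\<epsilon>::real. 0 < \<epsilon> \<and> \<epsilon> < \<epsilon>0 \<longrightarrow>
     (\<forall>(n::nat) (P::nat \<Rightarrow> nat \<Rightarrow> real) (\<pi>::nat \<Rightarrow> real) (A::nat set) (S::nat set).
        stochastic n P \<and> irreducible_chain n P \<and> aperiodic_chain n P \<and>
        reversible_wrt n P \<pi> \<and> A \<subseteq> S \<and> S \<subseteq> {..<n} \<and>
        (\<Sum>x\<in>A. \<pi> x) \<le> \<epsilon> * (\<Sum>x\<in>S. \<pi> x)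
        \<longrightarrow> (\<Sum>x\<in>A. harm n P \<pi> S x) \<le> C * (\<epsilon> * ln (1 / \<epsilon>)) / (1 - slem n P))"
proof -
  have bound: "(\<Sum>x\<in>A. harm n P \<pi> S x) \<le> 7 * (\<epsilon> * ln (1 / \<epsilon>)) / (1 - slem n P)"
    if "0 < \<epsilon>" "\<epsilon> < exp (-1)" "stochastic n P" "irreducible_chain n P" "aperiodic_chain n P"
      "reversible_wrt n P \<pi>" "A \<subseteq> S" "S \<subseteq> {..<n}" "(\<Sum>x\<in>A. \<pi> x) \<le> \<epsilon> * (\<Sum>x\<in>S. \<pi> x)"
    for \<epsilon> :: real and n P \<pi> and A S :: "nat set"
  proof -
    interpret killed_chain_target n P \<pi> S A
      using that by unfold_locales
    show ?thesis using harm_sum_le that unfolding mass_A_def mass_S_def by blast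
  qed
  show ?thesis
    using bound by (intro exI[of _ "7::real"] exI[of _ "exp (-1)"] conjI) auto
qed

end
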